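(* For all $0 \leqslant j \leqslant e-1$ and all $0\leqslant s <\alpha_{j+1}$, the tableau $T^{(s+1)}_j$ is a semistandard hook-valued tableau.
   Context: Tableaux are drawn in French notation. A semistandard Young tableau $U$ of hook shape consists of a hook entry $\mathsf{H}(U)=x$ in the corner, a leg $\mathsf{L}(U)=(\ell_1<\dots<\ell_p)$ stacked above $x$ (strictly increasing upward, $\ell_1>x$) and an arm $\mathsf{A}(U)=(a_1\leqslant\dots\leqslant a_q)$ to the right of $x$ (weakly increasing, $a_1\geqslant x$); arm and leg may be empty. The extended leg is $\mathsf{L}^+(U)=(x,\ell_1,\dots,\ell_p)$. A (semistandard) hook-valued tableau of shape $\lambda$ is a filling of the Young diagram of $\lambda$ with such hook tableaux so that $\max(A)\leqslant\min(B)$ when the cell containing $A$ is left of the cell containing $B$ in the same row, and $\max(A)<\min(C)$ when the cell containing $A$ is below the cell containing $C$ in the same column. For a cell $(r,c)$ (row $r$, column $c$) of a hook-valued tableau $h$ write $\mathsf{H}_h(r,c),\mathsf{L}_h(r,c),\mathsf{L}^+_h(r,c),\mathsf{A}_h(r,c)$ for the hook entry, leg, extended leg and arm of the entry in that cell. A set-valued tableau is a hook-valued tableau all of whose arms are empty. A column-flagged increasing tableau of shape $\mu/\lambda$ (with $\lambda\subseteq\mu$ having the same number of rows) is a filling of the cells of $\mu/\lambda$ with positive integers, strictly increasing along rows and columns, such that entries in column $i$ are at most $i-1$. Let $S$ be a set-valued tableau of shape $\mu$ and $F$ a column-flagged increasing tableau of shape $\mu/\lambda$ with $e$ entries. For a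 cell $(r,c)$ of $F$ with entry $F(r,c)$ its destination column is $d(r,c)=c-F(r,c)$. The crowding order lists the cells of $F$ as $(r_1,c_1),\dots,(r_e,c_e)$, ordered first by destination column (smallest to largest) and then by column index (largest to smallest); set $\alpha_i=F(r_i,c_i)$. Crowding bumping: let $h$ be a hook-valued tableau and $(r,c)$ a cell with $c>1$ and at most one element in $\mathsf{A}_h(r,c)$; if $\mathsf{A}_h(r,c)$ is empty, require $(r,c)$ to be a corner cell. Then $\mathcal{C}_b([h,(r,c)])$ is computed by: (1) If $\mathsf{A}_h(r,c)$ is nonempty, let $m$ be its only element and $b=\max\{x\in\mathsf{L}^+_h(r,c)\mid x\leqslant m\}$; otherwise let $m=\mathsf{H}_h(r,c)$ and $b=\max(\mathsf{L}^+_h(r,c))$. (2) Find the largest $r'$ with $\mathsf{H}_h(r',c-1)\leqslant b$. If $r'=r$ set $q=\mathsf{H}_h(r,c)$, otherwise $q=b$. Append $q$ to $\mathsf{A}_h(r',c-1)$. (3a) If $r'=r$: (i) if $\mathsf{A}_h(r,c)$ is nonempty, move $\{x\in\mathsf{L}_h(r,c)\mid q<x\leqslant m\}$ from $\mathsf{L}_h(r,c)$ into $\mathsf{L}_h(r',c-1)$ (keeping it strictly increasing), remove $m$ from $\mathsf{A}_h(r,c)$ and set $\mathsf{H}_h(r,c)=m$; (ii) otherwise move $\mathsf{L}_h(r,c)$ into $\mathsf{L}_h(r',c-1)$ (keeping it strictly increasing) and remove the cell $(r,c)$. (3b) If $r'\neq r$: (i) if $\mathsf{A}_h(r,c)$ is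 nonempty, replace $q$ in $\mathsf{L}^+_h(r,c)$ by $m$ and remove $m$ from $\mathsf{A}_h(r,c)$; (ii) otherwise remove the cell $(r,c)$. Writing $h'$ for the result, $\mathcal{C}_b([h,(r,c)])=[h',(r',c-1)]$, and $p_1$ denotes projection to $h'$. Define recursively, for $0\leqslant j\leqslant e-1$ and $0\leqslant s\leqslant\alpha_{j+1}$: $T^{(0)}_0=S$; $T^{(s)}_j=p_1\circ\mathcal{C}_b([T^{(s-1)}_j,(r_{j+1},c_{j+1})])$ for $s>0$, where $(r_{j+1},c_{j+1})$ here means the current cell obtained by iterating, i.e. $T^{(s)}_j$ is the first component of $\mathcal{C}_b^{\,s}([T^{(0)}_j,(r_{j+1},c_{j+1})])$; and $T^{(0)}_j=T^{(\alpha_j)}_{j-1}$ for $j>0$. (The hypotheses of the crowding bumping are satisfied at every step of this recursion, so all $T^{(s)}_j$ are defined as fillings with hook tableaux.) *)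

theory Defs
  imports Main "HOL-Library.Product_Lexorder"
begin

(* A hook tableau: hook entry H, leg L (stacked above H), arm A (to the right of H). *)
datatype hook = Hook (hk: nat) (leg: "nat list") (arm: "nat list")

definition ext_leg :: "hook \<Rightarrow> nat list" where
  "ext_leg U = hk U # leg U"

definition hentries :: "hook \<Rightarrow> nat set" where
  "hentries U = set (hk U # leg U @ arm U)"

definition hmin :: "hook \<Rightarrow> nat" where "hmin U = Min (hentries U)"
definition hmax :: "hook \<Rightarrow> nat" where "hmax U = Max (hentries U)"

definition valid_hook :: "hook \<Rightarrow> bool" where
  "valid_hook U \<longleftrightarrow> 0 < hk U
     \<and> sorted_wrt (<) (leg U) \<and> (\<forall>l\<in>set (leg U). hk U < l)
     \<and> sorted (arm U) \<and> (\<forall>a\<in>set (arm U). hk U \<le> a)"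

(* cells (r,c): row r, column c, both 1-indexed; French notation, row 1 at the bottom *)
type_synonym cell = "nat \<times> nat"
type_synonym hvt = "cell \<Rightarrow> hook option"

definition partition :: "nat list \<Rightarrow> bool" where
  "partition lam \<longleftrightarrow> sorted_wrt (\<ge>) lam \<and> (\<forall>p\<in>set lam. 0 < p)"

definition young :: "nat list \<Rightarrow> cell set" where
  "young lam = {(r,c). 1 \<le> r \<and> r \<le> length lam \<and> 1 \<le> c \<and> c \<le> lam ! (r - 1)}"

definition hvt_of_shape :: "nat list \<Rightarrow> hvt \<Rightarrow> bool" where
  "hvt_of_shape lam h \<longleftrightarrow> partition lam \<and> dom h = young lam
     \<and> (\<forall>p\<in>dom h. valid_hook (the (h p)))
     \<and> (\<forall>r c c'. (r,c) \<in> dom h \<and> (r,c') \<in> dom h \<and> c < c'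
          \<longrightarrow> hmax (the (h (r,c))) \<le> hmin (the (h (r,c'))))
     \<and> (\<forall>r r' c. (r,c) \<in> dom h \<and> (r',c) \<in> dom h \<and> r < r'
          \<longrightarrow> hmax (the (h (r,c))) < hmin (the (h (r',c))))"

definition is_hvt :: "hvt \<Rightarrow> bool" where
  "is_hvt h \<longleftrightarrow> (\<exists>lam. hvt_of_shape lam h)"

definition set_valued_of_shape :: "nat list \<Rightarrow> hvt \<Rightarrow> bool" where
  "set_valued_of_shape lam h \<longleftrightarrow> hvt_of_shape lam h \<and> (\<forall>p\<in>dom h. arm (the (h p)) = [])"

definition skew :: "nat list \<Rightarrow> nat list \<Rightarrow> cell set" where
  "skew mu lam = young mu - young lam"

definition col_flagged_incr :: "nat list \<Rightarrow> nat list \<Rightarrow> (cell \<Rightarrow> nat) \<Rightarrow> bool" where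
  "col_flagged_incr mu lam F \<longleftrightarrow>
     (\<forall>(r,c)\<in>skew mu lam. 0 < F (r,c) \<and> F (r,c) \<le> c - 1)
   \<and> (\<forall>r c c'. (r,c) \<in> skew mu lam \<and> (r,c') \<in> skew mu lam \<and> c < c' \<longrightarrow> F (r,c) < F (r,c'))
   \<and> (\<forall>r r' c. (r,c) \<in> skew mu lam \<and> (r',c) \<in> skew mu lam \<and> r < r' \<longrightarrow> F (r,c) < F (r',c))"

(* crowding order: by destination column c - F(r,c) ascending, then column descending *)
definition crowding_order :: "nat list \<Rightarrow> nat list \<Rightarrow> (cell \<Rightarrow> nat) \<Rightarrow> cell list" where
  "crowding_order mu lam F =
     sort_key (\<lambda>(r,c). (int c - int (F (r,c)), - int c)) (sorted_list_of_set (skew mu lam))"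

definition crowd_bump :: "hvt \<times> cell \<Rightarrow> hvt \<times> cell" where
  "crowd_bump hc = (case hc of (h, (r,c)) \<Rightarrow>
     let U = the (h (r,c)); x = hk U; L = leg U; A = arm U; Lp = ext_leg U;
         m = (if A \<noteq> [] then hd A else x);
         b = (if A \<noteq> [] then Max {y \<in> set Lp. y \<le> m} else Max (set Lp));
         r' = (GREATEST r'. (r', c - 1) \<in> dom h \<and> hk (the (h (r', c - 1))) \<le> b);
         q = (if r' = r then x else b);
         V = the (h (r', c - 1));
         V1 = Hook (hk V) (leg V) (arm V @ [q]);
         h1 = h((r', c - 1) := Some V1);
         h' = (if r' = r then
                 (if A \<noteq> [] then
                    let moved = filter (\<lambda>y. q < y \<and> y \<le> m) L;
                        kept = filter (\<lambda>y. \<not> (q < y \<and> y \<le> m)) L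
                    in h1((r', c - 1) := Some (Hook (hk V1) (sort (leg V1 @ moved)) (arm V1)),
                          (r, c) := Some (Hook m kept (remove1 m A)))
                  else
                    h1((r', c - 1) := Some (Hook (hk V1) (sort (leg V1 @ L)) (arm V1)),
                       (r, c) := None))
               else
                 (if A \<noteq> [] then
                    let Lp' = map (\<lambda>y. if y = q then m else y) Lp
                    in h1((r, c) := Some (Hook (hd Lp') (tl Lp') (remove1 m A)))
                  else h1((r, c) := None)))
     in (h', (r', c - 1)))"

primrec T_start :: "hvt \<Rightarrow> cell list \<Rightarrow> (cell \<Rightarrow> nat) \<Rightarrow> nat \<Rightarrow> hvt" where
  "T_start S ol F 0 = S"
| "T_start S ol F (Suc j) = fst ((crowd_bump ^^ F (ol ! j)) (T_start S ol F j, ol ! j))"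

(* T_j^{(s)}, with j 0-indexed and (r_{j+1},c_{j+1}) = ol ! j *)
definition T_seq :: "hvt \<Rightarrow> cell list \<Rightarrow> (cell \<Rightarrow> nat) \<Rightarrow> nat \<Rightarrow> nat \<Rightarrow> hvt" where
  "T_seq S ol F j s = fst ((crowd_bump ^^ s) (T_start S ol F j, ol ! j))"

end

theory Submission
  imports Defs
begin

text \<open>A crowding bump changes at most two cells, so semistandardness of the result only has to
  be checked at those cells against their four neighbours. The choice of \<open>b\<close> and \<open>r'\<close> makes
  every check routine but one: when \<open>r' \<noteq> r\<close>, the entry \<open>b\<close> is appended to the arm of
  \<open>(r', c - 1)\<close>, which needs the arm already there to be bounded by \<open>b\<close>. Arms other than the
  current one only occur in the destination column, deposited by the earlier cells with the same
  destination column. The bumping path of each such cell runs weakly above the path of its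
  predecessor, because bumping is monotone along weakly increasing paths of entries; hence when
  the current path reaches the destination column, every arm it can meet is bounded by \<open>b\<close>.
  This is maintained as an invariant over the whole recursion defining the tableaux \<open>T\<close>.\<close>

section \<open>Semistandard fillings of lower-closed shapes\<close>

definition entries :: "hvt \<Rightarrow> cell \<Rightarrow> nat set" where
  "entries h p = hentries (the (h p))"

definition set_le :: "nat set \<Rightarrow> nat set \<Rightarrow> bool" where
  "set_le A B \<longleftrightarrow> (\<forall>a\<in>A. \<forall>b\<in>B. a \<le> b)"

definition set_less :: "nat set \<Rightarrow> nat set \<Rightarrow> bool" where
  "set_less A B \<longleftrightarrow> (\<forall>a\<in>A. \<forall>b\<in>B. a < b)"

lemma set_le_Un [simp]:
  "set_le (A \<union> B) C \<longleftrightarrow> set_le A C \<and> set_le B C"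
  "set_le A (B \<union> C) \<longleftrightarrow> set_le A B \<and> set_le A C"
  by (auto simp: set_le_def)

lemma set_less_Un [simp]:
  "set_less (A \<union> B) C \<longleftrightarrow> set_less A C \<and> set_less B C"
  "set_less A (B \<union> C) \<longleftrightarrow> set_less A B \<and> set_less A C"
  by (auto simp: set_less_def)

lemma set_le_insert [simp]:
  "set_le A (insert b B) \<longleftrightarrow> (\<forall>a\<in>A. a \<le> b) \<and> set_le A B"
  "set_le (insert a A) B \<longleftrightarrow> (\<forall>b\<in>B. a \<le> b) \<and> set_le A B"
  by (auto simp: set_le_def)

lemma set_less_insert [simp]:
  "set_less A (insert b B) \<longleftrightarrow> (\<forall>a\<in>A. a < b) \<and> set_less A B"
  "set_less (insert a A) B \<longleftrightarrow> (\<forall>b\<in>B. a < b) \<and> set_less A B"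
  by (auto simp: set_less_def)

lemma set_le_trans: "set_le A B \<Longrightarrow> set_le B C \<Longrightarrow> b \<in> B \<Longrightarrow> set_le A C"
  unfolding set_le_def by (meson order_trans)

lemma set_less_trans: "set_less A B \<Longrightarrow> set_less B C \<Longrightarrow> b \<in> B \<Longrightarrow> set_less A C"
  unfolding set_less_def by (meson order.strict_trans)

lemma set_less_le_trans: "set_less A B \<Longrightarrow> set_le B C \<Longrightarrow> b \<in> B \<Longrightarrow> set_less A C"
  unfolding set_le_def set_less_def by (meson less_le_trans)

lemma set_le_insert_above: "set_le A B \<Longrightarrow> y \<in> B \<Longrightarrow> y \<le> z \<Longrightarrow> set_le A (insert z B)"
  unfolding set_le_def by (auto intro: order_trans)

lemma set_less_insert_above: "set_less A B \<Longrightarrow> y \<in> B \<Longrightarrow> y \<le> z \<Longrightarrow> set_less A (insert z B)"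
  unfolding set_less_def by (auto intro: less_le_trans)

lemma set_le_subset: "set_le A B \<Longrightarrow> A' \<subseteq> A \<Longrightarrow> B' \<subseteq> B \<Longrightarrow> set_le A' B'"
  by (auto simp: set_le_def)

lemma set_less_subset: "set_less A B \<Longrightarrow> A' \<subseteq> A \<Longrightarrow> B' \<subseteq> B \<Longrightarrow> set_less A' B'"
  by (auto simp: set_less_def)

lemma hk_in_entries [simp]: "hk (the (h p)) \<in> entries h p"
  by (simp add: entries_def hentries_def)

lemma entries_upd_same [simp]: "entries (h(p := Some U)) p = hentries U"
  by (simp add: entries_def)

lemma entries_upd_other [simp]: "p' \<noteq> p \<Longrightarrow> entries (h(p := v)) p' = entries h p'"
  by (simp add: entries_def)

lemma hentries_ext_leg_arm: "hentries U = set (ext_leg U) \<union> set (arm U)"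
  by (auto simp: hentries_def ext_leg_def)

lemma hk_in_hentries [simp]: "hk U \<in> hentries U"
  by (simp add: hentries_def)

lemma finite_hentries [simp]: "finite (hentries U)"
  by (simp add: hentries_def)

lemma valid_hook_Hook:
  "valid_hook (Hook x l a) \<longleftrightarrow>
     0 < x \<and> sorted_wrt (<) l \<and> (\<forall>y\<in>set l. x < y) \<and> sorted a \<and> (\<forall>y\<in>set a. x \<le> y)"
  by (simp add: valid_hook_def)

lemma valid_hook_hk_le: "valid_hook U \<Longrightarrow> y \<in> hentries U \<Longrightarrow> hk U \<le> y"
  by (auto simp: valid_hook_def hentries_def)

lemma valid_hook_pos: "valid_hook U \<Longrightarrow> y \<in> hentries U \<Longrightarrow> 0 < y"
  using valid_hook_hk_le[of U y] by (auto simp: valid_hook_def)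

lemma valid_hook_ext_leg: "valid_hook U \<Longrightarrow> sorted_wrt (<) (ext_leg U)"
  by (simp add: valid_hook_def ext_leg_def)

lemma hmax_le_hmin: "set_le (hentries A) (hentries B) \<Longrightarrow> hmax A \<le> hmin B"
  unfolding hmax_def hmin_def set_le_def
  by (metis Max_in Min_in empty_iff finite_hentries hk_in_hentries)

lemma hmax_less_hmin: "set_less (hentries A) (hentries B) \<Longrightarrow> hmax A < hmin B"
  unfolding hmax_def hmin_def set_less_def
  by (metis Max_in Min_in empty_iff finite_hentries hk_in_hentries)

lemma set_le_if_hmax_le_hmin: "hmax A \<le> hmin B \<Longrightarrow> set_le (hentries A) (hentries B)"
  unfolding set_le_def hmax_def hmin_def by (meson Max_ge Min_le finite_hentries order_trans)

lemma set_less_if_hmax_less_hmin: "hmax A < hmin B \<Longrightarrow> set_less (hentries A) (hentries B)"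
  unfolding set_less_def hmax_def hmin_def by (meson Max_ge Min_le finite_hentries le_less_trans less_le_trans)

lemma valid_hook_of_strict_list:
  "l \<noteq> [] \<Longrightarrow> sorted_wrt (<) l \<Longrightarrow> 0 < hd l \<Longrightarrow> valid_hook (Hook (hd l) (tl l) [])"
  by (cases l) (auto simp: valid_hook_def)

lemma hentries_of_list: "l \<noteq> [] \<Longrightarrow> hentries (Hook (hd l) (tl l) []) = set l"
  by (cases l) (auto simp: hentries_def)

definition lower_closed :: "cell set \<Rightarrow> bool" where
  "lower_closed D \<longleftrightarrow> (\<forall>r c. (r,c) \<in> D \<longrightarrow> 1 \<le> r \<and> 1 \<le> c \<and>
      (\<forall>r' c'. 1 \<le> r' \<longrightarrow> r' \<le> r \<longrightarrow> 1 \<le> c' \<longrightarrow> c' \<le> c \<longrightarrow> (r',c') \<in> D))"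

lemma lower_closedD:
  assumes "lower_closed D" "(r,c) \<in> D"
  shows "1 \<le> r" "1 \<le> c"
    and "1 \<le> r' \<Longrightarrow> r' \<le> r \<Longrightarrow> 1 \<le> c' \<Longrightarrow> c' \<le> c \<Longrightarrow> (r',c') \<in> D"
  using assms unfolding lower_closed_def by blast+

lemma lower_closed_remove_corner:
  assumes "lower_closed D" "(Suc r, c) \<notin> D" "(r, Suc c) \<notin> D"
  shows "lower_closed (D - {(r,c)})"
  unfolding lower_closed_def
proof (intro allI impI conjI)
  fix r1 c1 assume a: "(r1,c1) \<in> D - {(r,c)}"
  then show "1 \<le> r1" "1 \<le> c1" using lower_closedD(1,2)[OF assms(1)] by auto
  fix r2 c2 assume b: "1 \<le> r2" "r2 \<le> r1" "1 \<le> c2" "c2 \<le> c1"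
  have "(r2,c2) \<in> D" using lower_closedD(3)[OF assms(1)] a b by blast
  moreover have "(r2,c2) \<noteq> (r,c)"
  proof
    assume e: "(r2,c2) = (r,c)"
    then consider "r1 = r" "c < c1" | "r < r1" using a b by fastforce
    then show False
    proof cases
      case 1
      then show False using lower_closedD(3)[OF assms(1), of r1 c1 r "Suc c"] a b e assms(3) by auto
    next
      case 2
      then show False using lower_closedD(3)[OF assms(1), of r1 c1 "Suc r" c] a b e assms(2) by auto
    qed
  qed
  ultimately show "(r2,c2) \<in> D - {(r,c)}" by simp
qed

lemma partition_nth_mono:
  "partition lam \<Longrightarrow> i \<le> i' \<Longrightarrow> i' < length lam \<Longrightarrow> lam ! i' \<le> lam ! i"
  unfolding partition_def by (metis le_less sorted_wrt_iff_nth_less)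

lemma lower_closed_young:
  assumes "partition lam"
  shows "lower_closed (young lam)"
  unfolding lower_closed_def
proof (intro allI impI conjI)
  fix r c r' c' assume rc: "(r,c) \<in> young lam" and "1 \<le> r'" "r' \<le> r" "1 \<le> c'" "c' \<le> c"
  moreover have "r' - 1 \<le> r - 1" "r - 1 < length lam"
    using rc \<open>r' \<le> r\<close> by (auto simp: young_def)
  then have "lam ! (r - 1) \<le> lam ! (r' - 1)" by (rule partition_nth_mono[OF assms])
  ultimately show "(r',c') \<in> young lam" by (simp add: young_def)
qed (simp_all add: young_def)

lemma finite_young: "finite (young lam)"
proof -
  have "young lam \<subseteq> {0..length lam} \<times> {0..sum_list lam}"
    by (auto simp: young_def intro!: order_trans[OF _ elem_le_sum_list])
  then show ?thesis using finite_subset by blast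
qed

lemma initial_segment_eq_atLeastAtMost:
  assumes "finite S" "0 \<notin> S" "\<And>c c'. c \<in> S \<Longrightarrow> 1 \<le> c' \<Longrightarrow> c' \<le> c \<Longrightarrow> c' \<in> S"
  shows "S = {1..card S}"
proof (cases "S = {}")
  case False
  have "S = {1..Max S}"
  proof
    show "S \<subseteq> {1..Max S}" using assms(1,2) False by (auto simp: Suc_le_eq intro: Max_ge)
    show "{1..Max S} \<subseteq> S" using assms(3) Max_in[OF assms(1) False] by auto
  qed
  then show ?thesis by (metis card_atLeastAtMost diff_Suc_1)
qed simp

lemma lower_closed_eq_young:
  assumes fin: "finite D" and lc: "lower_closed D"
  obtains lam where "partition lam" "young lam = D"
proof -
  define len where "len r = card {c. (r,c) \<in> D}" for r
  define R where "R = card {r. (r,1) \<in> D}"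
  have row: "{c. (r,c) \<in> D} = {1..len r}" for r
    unfolding len_def
  proof (rule initial_segment_eq_atLeastAtMost)
    have "{c. (r,c) \<in> D} \<subseteq> snd ` D" by force
    then show "finite {c. (r,c) \<in> D}" using fin by (rule finite_subset[OF _ finite_imageI])
    show "0 \<notin> {c. (r,c) \<in> D}" using lower_closedD(2)[OF lc] by force
    fix c c' assume "c \<in> {c. (r,c) \<in> D}" "1 \<le> c'" "c' \<le> c"
    then show "c' \<in> {c. (r,c) \<in> D}" using lower_closedD(1)[OF lc, of r c] lower_closedD(3)[OF lc, of r c r c'] by simp
  qed
  have col: "{r. (r,1) \<in> D} = {1..R}"
    unfolding R_def
  proof (rule initial_segment_eq_atLeastAtMost)
    have "{r. (r,1) \<in> D} \<subseteq> fst ` D" by force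
    then show "finite {r. (r,1) \<in> D}" using fin by (rule finite_subset[OF _ finite_imageI])
    show "0 \<notin> {r. (r,1) \<in> D}" using lower_closedD(1)[OF lc] by force
    fix r r' assume "r \<in> {r. (r,1) \<in> D}" "1 \<le> r'" "r' \<le> r"
    then show "r' \<in> {r. (r,1) \<in> D}" using lower_closedD(3)[OF lc, of r 1 r' 1] by simp
  qed
  have mem: "(r,c) \<in> D \<longleftrightarrow> r \<in> {1..R} \<and> c \<in> {1..len r}" for r c
  proof
    assume a: "(r,c) \<in> D"
    then have "(r,1) \<in> D" using lower_closedD[OF lc a] by simp
    then show "r \<in> {1..R} \<and> c \<in> {1..len r}" using a col row[of r] by blast
  qed (use row col in blast)
  have len_pos: "0 < len r" if "r \<in> {1..R}" for r
    using that col mem[of r 1] by auto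
  have len_mono: "len r' \<le> len r" if "1 \<le> r" "r \<le> r'" "r' \<le> R" for r r'
  proof -
    have "(r', len r') \<in> D" using that len_pos[of r'] mem[of r' "len r'"] by simp
    then have "(r, len r') \<in> D" using that lower_closedD[OF lc] by blast
    then show ?thesis using mem by simp
  qed
  define lam where "lam = map (\<lambda>i. len (Suc i)) [0..<R]"
  have "sorted_wrt (\<ge>) lam"
    unfolding lam_def sorted_wrt_iff_nth_less by (auto intro!: len_mono)
  moreover have "\<forall>p\<in>set lam. 0 < p"
    unfolding lam_def by (auto intro!: len_pos)
  moreover have "young lam = D"
  proof (rule set_eqI)
    fix p :: cell
    obtain r c where p: "p = (r,c)" by (cases p)
    have "lam ! (r - 1) = len r" if "r \<in> {1..R}" using that by (cases r) (auto simp: lam_def)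
    then show "p \<in> young lam \<longleftrightarrow> p \<in> D" unfolding p mem young_def by (auto simp: lam_def)
  qed
  ultimately show thesis by (intro that) (simp_all add: partition_def)
qed

definition semistandard :: "hvt \<Rightarrow> bool" where
  "semistandard h \<longleftrightarrow> finite (dom h) \<and> lower_closed (dom h) \<and> (\<forall>p\<in>dom h. valid_hook (the (h p)))
    \<and> (\<forall>r c. (r,c) \<in> dom h \<longrightarrow> (r, Suc c) \<in> dom h \<longrightarrow> set_le (entries h (r,c)) (entries h (r, Suc c)))
    \<and> (\<forall>r c. (r,c) \<in> dom h \<longrightarrow> (Suc r, c) \<in> dom h \<longrightarrow> set_less (entries h (r,c)) (entries h (Suc r, c)))"

context
  fixes h :: hvt
  assumes ss: "semistandard h"
begin

lemma semistandard_valid: "p \<in> dom h \<Longrightarrow> valid_hook (the (h p))"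
  using ss by (simp add: semistandard_def)

lemma semistandard_lower_closed: "lower_closed (dom h)"
  using ss by (simp add: semistandard_def)

lemma semistandard_row:
  assumes "(r,c) \<in> dom h" "(r,c') \<in> dom h" "c < c'"
  shows "set_le (entries h (r,c)) (entries h (r,c'))"
  using assms(2,3)
proof (induction c')
  case (Suc c')
  have "(r,c') \<in> dom h"
    using lower_closedD(3)[OF semistandard_lower_closed Suc.prems(1), of r c'] Suc.prems(2)
      lower_closedD(1,2)[OF semistandard_lower_closed assms(1)] by simp
  moreover have "set_le (entries h (r,c')) (entries h (r, Suc c'))"
    using ss Suc.prems(1) calculation by (simp add: semistandard_def)
  ultimately show ?case
    using Suc.IH Suc.prems(2) by (cases "c = c'") (auto intro: set_le_trans[OF _ _ hk_in_entries])
qed simp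

lemma semistandard_col:
  assumes "(r,c) \<in> dom h" "(r',c) \<in> dom h" "r < r'"
  shows "set_less (entries h (r,c)) (entries h (r',c))"
  using assms(2,3)
proof (induction r')
  case (Suc r')
  have "(r',c) \<in> dom h"
    using lower_closedD(3)[OF semistandard_lower_closed Suc.prems(1), of r' c] Suc.prems(2)
      lower_closedD(1,2)[OF semistandard_lower_closed assms(1)] by simp
  moreover have "set_less (entries h (r',c)) (entries h (Suc r', c))"
    using ss Suc.prems(1) calculation by (simp add: semistandard_def)
  ultimately show ?case
    using Suc.IH Suc.prems(2) by (cases "r = r'") (auto intro: set_less_trans[OF _ _ hk_in_entries])
qed simp

lemma semistandard_imp_is_hvt: "is_hvt h"
proof -
  obtain lam where "partition lam" "young lam = dom h"
    using lower_closed_eq_young[of "dom h"] ss unfolding semistandard_def by blast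
  moreover have "hmax (the (h (r,c))) \<le> hmin (the (h (r,c')))"
    if "(r,c) \<in> dom h" "(r,c') \<in> dom h" "c < c'" for r c c'
    using semistandard_row[OF that] by (simp add: entries_def hmax_le_hmin)
  moreover have "hmax (the (h (r,c))) < hmin (the (h (r',c)))"
    if "(r,c) \<in> dom h" "(r',c) \<in> dom h" "r < r'" for r r' c
    using semistandard_col[OF that] by (simp add: entries_def hmax_less_hmin)
  ultimately have "hvt_of_shape lam h"
    using semistandard_valid unfolding hvt_of_shape_def by blast
  then show ?thesis by (auto simp: is_hvt_def)
qed

end

lemma hvt_of_shape_semistandard: "hvt_of_shape lam h \<Longrightarrow> semistandard h"
  unfolding hvt_of_shape_def semistandard_def entries_def
  by (auto simp: lower_closed_young finite_young
      intro!: set_le_if_hmax_le_hmin set_less_if_hmax_less_hmin)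

section \<open>A single crowding bump\<close>

fun fits_at :: "hvt \<Rightarrow> cell \<Rightarrow> bool" where
  "fits_at h (r,c) \<longleftrightarrow> valid_hook (the (h (r,c)))
     \<and> ((r, c - 1) \<in> dom h \<longrightarrow> set_le (entries h (r, c - 1)) (entries h (r,c)))
     \<and> ((r, Suc c) \<in> dom h \<longrightarrow> set_le (entries h (r,c)) (entries h (r, Suc c)))
     \<and> ((r - 1, c) \<in> dom h \<longrightarrow> set_less (entries h (r - 1, c)) (entries h (r,c)))
     \<and> ((Suc r, c) \<in> dom h \<longrightarrow> set_less (entries h (r,c)) (entries h (Suc r, c)))"

declare fits_at.simps [simp del]

lemma semistandard_update:
  assumes ss: "semistandard h" and dom: "dom h' \<subseteq> dom h" and lc: "lower_closed (dom h')"
    and unchanged: "\<And>p. p \<notin> C \<Longrightarrow> h' p = h p"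
    and fits: "\<And>p. p \<in> C \<Longrightarrow> p \<in> dom h' \<Longrightarrow> fits_at h' p"
  shows "semistandard h'"
proof -
  have entries_eq: "p \<notin> C \<Longrightarrow> entries h' p = entries h p" for p
    using unchanged by (simp add: entries_def)
  have dom_eq: "p \<notin> C \<Longrightarrow> p \<in> dom h' \<longleftrightarrow> p \<in> dom h" for p
    using unchanged by (simp add: domIff)
  have "valid_hook (the (h' p))" if "p \<in> dom h'" for p
    using that fits[of p] unchanged[of p] dom semistandard_valid[OF ss, of p]
    by (cases p; cases "p \<in> C") (auto simp: fits_at.simps)
  moreover have "set_le (entries h' (i,j)) (entries h' (i, Suc j))"
    if "(i,j) \<in> dom h'" "(i, Suc j) \<in> dom h'" for i j
    using that fits[of "(i,j)"] fits[of "(i, Suc j)"] entries_eq dom_eq ss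
    by (cases "(i,j) \<in> C"; cases "(i, Suc j) \<in> C") (auto simp: semistandard_def fits_at.simps)
  moreover have "set_less (entries h' (i,j)) (entries h' (Suc i, j))"
    if "(i,j) \<in> dom h'" "(Suc i, j) \<in> dom h'" for i j
    using that fits[of "(i,j)"] fits[of "(Suc i, j)"] entries_eq dom_eq ss
    by (cases "(i,j) \<in> C"; cases "(Suc i, j) \<in> C") (auto simp: semistandard_def fits_at.simps)
  ultimately show ?thesis
    using finite_subset[OF dom] ss lc by (simp add: semistandard_def)
qed

definition bump_bound :: "hook \<Rightarrow> nat" where
  "bump_bound U = (if arm U \<noteq> [] then Max {y \<in> set (ext_leg U). y \<le> hd (arm U)}
                   else Max (set (ext_leg U)))"

definition bump_row :: "hvt \<Rightarrow> cell \<Rightarrow> nat" where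
  "bump_row h p = (GREATEST r'. (r', snd p - 1) \<in> dom h
                     \<and> hk (the (h (r', snd p - 1))) \<le> bump_bound (the (h p)))"

definition bump_value :: "hvt \<Rightarrow> cell \<Rightarrow> nat" where
  "bump_value h p = (if bump_row h p = fst p then hk (the (h p)) else bump_bound (the (h p)))"

lemma snd_crowd_bump: "snd (crowd_bump (h,(r,c))) = (bump_row h (r,c), c - 1)"
  by (simp add: crowd_bump_def Let_def bump_row_def bump_bound_def)

lemma crowd_bump_corner_same_row:
  assumes "arm (the (h (r,c))) = []" "bump_row h (r,c) = r"
  shows "fst (crowd_bump (h,(r,c))) = h((r, c - 1) := Some (Hook (hk (the (h (r, c - 1))))
            (sort (leg (the (h (r, c - 1))) @ leg (the (h (r,c)))))
            (arm (the (h (r, c - 1))) @ [hk (the (h (r,c)))])), (r,c) := None)"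
  using assms unfolding bump_row_def bump_bound_def by (simp add: crowd_bump_def Let_def)

lemma crowd_bump_corner_new_row:
  assumes "arm (the (h (r,c))) = []" "bump_row h (r,c) \<noteq> r"
  shows "fst (crowd_bump (h,(r,c))) = h((bump_row h (r,c), c - 1) :=
            Some (Hook (hk (the (h (bump_row h (r,c), c - 1)))) (leg (the (h (bump_row h (r,c), c - 1))))
              (arm (the (h (bump_row h (r,c), c - 1))) @ [bump_bound (the (h (r,c)))])),
          (r,c) := None)"
  using assms unfolding bump_row_def bump_bound_def by (simp add: crowd_bump_def Let_def)

lemma crowd_bump_arm_same_row:
  assumes "arm (the (h (r,c))) = [m]" "bump_row h (r,c) = r"
  shows "fst (crowd_bump (h,(r,c))) = h((r, c - 1) := Some (Hook (hk (the (h (r, c - 1))))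
            (sort (leg (the (h (r, c - 1))) @ filter (\<lambda>y. hk (the (h (r,c))) < y \<and> y \<le> m) (leg (the (h (r,c))))))
            (arm (the (h (r, c - 1))) @ [hk (the (h (r,c)))])),
          (r,c) := Some (Hook m (filter (\<lambda>y. \<not> (hk (the (h (r,c))) < y \<and> y \<le> m)) (leg (the (h (r,c))))) []))"
  using assms unfolding bump_row_def bump_bound_def by (simp add: crowd_bump_def Let_def)

lemma crowd_bump_arm_new_row:
  assumes "arm (the (h (r,c))) = [m]" "bump_row h (r,c) \<noteq> r"
  shows "fst (crowd_bump (h,(r,c))) = h((bump_row h (r,c), c - 1) :=
            Some (Hook (hk (the (h (bump_row h (r,c), c - 1)))) (leg (the (h (bump_row h (r,c), c - 1))))
              (arm (the (h (bump_row h (r,c), c - 1))) @ [bump_bound (the (h (r,c)))])),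
          (r,c) := Some (Hook
            (hd (map (\<lambda>y. if y = bump_bound (the (h (r,c))) then m else y) (ext_leg (the (h (r,c))))))
            (tl (map (\<lambda>y. if y = bump_bound (the (h (r,c))) then m else y) (ext_leg (the (h (r,c)))))) []))"
  using assms unfolding bump_row_def bump_bound_def
  by (simp add: crowd_bump_def Let_def assms(1) cong: if_cong)

locale bump_site =
  fixes h :: hvt and r c :: nat
  assumes semistandard: "semistandard h" and cell_in: "(r,c) \<in> dom h" and col_ge2: "2 \<le> c"
    and site: "(arm (the (h (r,c))) = [] \<and> (Suc r, c) \<notin> dom h \<and> (r, Suc c) \<notin> dom h)
               \<or> (\<exists>m. arm (the (h (r,c))) = [m])"
begin

abbreviation "U \<equiv> the (h (r,c))"
abbreviation "bU \<equiv> bump_bound U"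
abbreviation "rT \<equiv> bump_row h (r,c)"
abbreviation "V \<equiv> the (h (rT, c - 1))"
abbreviation "qT \<equiv> bump_value h (r,c)"

lemma valid_U: "valid_hook U"
  using semistandard_valid[OF semistandard cell_in] .

lemma left_in: "(r, c - 1) \<in> dom h"
  using lower_closedD[OF semistandard_lower_closed[OF semistandard] cell_in] col_ge2 by simp

lemma arm_U_ge: "a \<in> set (arm U) \<Longrightarrow> hk U \<le> a"
  using valid_U by (simp add: valid_hook_def)

lemma bU_corner: "arm U = [] \<Longrightarrow> bU = Max (set (ext_leg U))"
  by (simp add: bump_bound_def)

lemma bU_arm: "arm U = [m] \<Longrightarrow> bU = Max {y \<in> set (ext_leg U). y \<le> m}"
  by (simp add: bump_bound_def)

lemma bU_in_ext_leg: "bU \<in> set (ext_leg U)" and hk_U_le_bU: "hk U \<le> bU"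
proof -
  have hk_in: "hk U \<in> set (ext_leg U)" by (simp add: ext_leg_def)
  have "bU \<in> set (ext_leg U) \<and> hk U \<le> bU"
  proof (cases "arm U = []")
    case True
    have "Max (set (ext_leg U)) \<in> set (ext_leg U)" using hk_in by (intro Max_in) auto
    then show ?thesis using bU_corner[OF True] Max_ge[OF finite_set hk_in] by simp
  next
    case False
    then obtain m where m: "arm U = [m]" using site by auto
    then have "hk U \<in> {y \<in> set (ext_leg U). y \<le> m}" using hk_in arm_U_ge[of m] by simp
    moreover from this have "bU \<in> {y \<in> set (ext_leg U). y \<le> m}"
      unfolding bU_arm[OF m] by (intro Max_in) auto
    ultimately show ?thesis using bU_arm[OF m] by simp
  qed
  then show "bU \<in> set (ext_leg U)" "hk U \<le> bU" by auto
qed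

lemma bU_in_entries: "bU \<in> entries h (r,c)"
  using bU_in_ext_leg by (simp add: entries_def hentries_ext_leg_arm)

lemma bU_max_corner: "arm U = [] \<Longrightarrow> y \<in> entries h (r,c) \<Longrightarrow> y \<le> bU"
  using bU_corner by (simp add: entries_def hentries_ext_leg_arm)

lemma bU_le_arm:
  assumes "arm U = [m]"
  shows "bU \<le> m"
proof -
  have "hk U \<in> {y \<in> set (ext_leg U). y \<le> m}" using assms arm_U_ge[of m] by (simp add: ext_leg_def)
  then have "bU \<in> {y \<in> set (ext_leg U). y \<le> m}"
    unfolding bU_arm[OF assms] by (intro Max_in) auto
  then show ?thesis by simp
qed

lemma bU_max_arm: "arm U = [m] \<Longrightarrow> y \<in> set (ext_leg U) \<Longrightarrow> y \<le> m \<Longrightarrow> y \<le> bU"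
  using bU_arm[of m] by simp

lemma rT_props: "(rT, c - 1) \<in> dom h \<and> hk V \<le> bU \<and> r \<le> rT"
  and rT_greatest: "(i, c - 1) \<in> dom h \<Longrightarrow> hk (the (h (i, c - 1))) \<le> bU \<Longrightarrow> i \<le> rT"
proof -
  let ?P = "\<lambda>i. (i, c - 1) \<in> dom h \<and> hk (the (h (i, c - 1))) \<le> bU"
  have "set_le (entries h (r, c - 1)) (entries h (r,c))"
    using semistandard_row[OF semistandard left_in cell_in] col_ge2 by simp
  then have "hk (the (h (r, c - 1))) \<le> hk U" by (simp add: set_le_def)
  then have P: "?P r" using left_in hk_U_le_bU by simp
  have bounded: "?P i \<Longrightarrow> i \<le> Max (fst ` dom h)" for i
    using semistandard by (metis Max_ge finite_imageI fst_conv image_eqI semistandard_def)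
  have "rT = Greatest ?P" by (simp add: bump_row_def)
  then show "(rT, c - 1) \<in> dom h \<and> hk V \<le> bU \<and> r \<le> rT"
    using GreatestI_nat[of ?P r, OF P bounded] Greatest_le_nat[of ?P r, OF P bounded] by simp
  show "i \<le> rT" if "(i, c - 1) \<in> dom h" "hk (the (h (i, c - 1))) \<le> bU"
    using Greatest_le_nat[of ?P i, OF _ bounded] that by (simp add: bump_row_def)
qed

lemma rT_in: "(rT, c - 1) \<in> dom h" and hk_V_le_bU: "hk V \<le> bU" and r_le_rT: "r \<le> rT"
  using rT_props by simp_all

lemma above_rT_gt: "(i, c - 1) \<in> dom h \<Longrightarrow> rT < i \<Longrightarrow> y \<in> entries h (i, c - 1) \<Longrightarrow> bU < y"
  using rT_greatest[of i] valid_hook_hk_le[OF semistandard_valid[OF semistandard]]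
  by (fastforce simp: entries_def)

lemma qT_eq: "qT = (if rT = r then hk U else bU)"
  by (simp add: bump_value_def)

lemma qT_le_arm: "arm U = [m] \<Longrightarrow> qT \<le> m"
  using qT_eq bU_le_arm arm_U_ge[of m] hk_U_le_bU by (cases "rT = r") auto

abbreviation "W \<equiv> the (h (r, c - 1))"

lemma r_pos: "1 \<le> r"
  using lower_closedD(1)[OF semistandard_lower_closed[OF semistandard] cell_in] .

lemma row_W_U: "set_le (entries h (r, c - 1)) (entries h (r,c))"
  using semistandard_row[OF semistandard left_in cell_in] col_ge2 by simp

lemma fits_at_new_row:
  assumes new_row: "rT \<noteq> r" and arm_V: "\<forall>a\<in>set (arm V). a \<le> bU"
    and at_V: "h' (rT, c - 1) = Some (Hook (hk V) (leg V) (arm V @ [bU]))"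
    and unchanged: "\<And>p. p \<noteq> (rT, c - 1) \<Longrightarrow> p \<noteq> (r,c) \<Longrightarrow> h' p = h p"
  shows "fits_at h' (rT, c - 1)"
proof -
  have rT_gt: "r < rT" using r_le_rT new_row by simp
  have nb: "h' p = h p" if "p \<in> {(rT, c - 1 - 1), (rT, c), (rT - 1, c - 1), (Suc rT, c - 1)}" for p
    using that new_row col_ge2 rT_gt by (auto intro!: unchanged)
  have dom_nb: "p \<in> dom h' \<longleftrightarrow> p \<in> dom h" and entries_nb: "entries h' p = entries h p"
    if "p \<in> {(rT, c - 1 - 1), (rT, c), (rT - 1, c - 1), (Suc rT, c - 1)}" for p
    using nb[OF that] by (simp_all add: domIff entries_def)
  have E: "entries h' (rT, c - 1) = insert bU (entries h (rT, c - 1))"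
    using at_V by (auto simp: entries_def hentries_def)
  have row: "set_le (entries h (rT, j)) (entries h (rT, c - 1))"
    if "(rT, j) \<in> dom h" "j < c - 1" for j
    using semistandard_row[OF semistandard that(1) rT_in that(2)] .
  have col: "set_less (entries h (i, c - 1)) (entries h (rT, c - 1))"
    if "(i, c - 1) \<in> dom h" "i < rT" for i
    using semistandard_col[OF semistandard that(1) rT_in that(2)] .
  show ?thesis
    unfolding fits_at.simps
  proof (intro conjI impI)
    show "valid_hook (the (h' (rT, c - 1)))"
      using at_V semistandard_valid[OF semistandard rT_in] arm_V hk_V_le_bU
      by (simp add: valid_hook_def sorted_append)
  next
    assume "(rT, c - 1 - 1) \<in> dom h'"
    then have "set_le (entries h (rT, c - 1 - 1)) (entries h (rT, c - 1))"
      using row[of "c - 1 - 1"] col_ge2 dom_nb by simp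
    then show "set_le (entries h' (rT, c - 1 - 1)) (entries h' (rT, c - 1))"
      using set_le_insert_above[OF _ hk_in_entries[of h "(rT, c - 1)"] hk_V_le_bU] entries_nb[of "(rT, c - 1 - 1)"] E
      by simp
  next
    assume "(rT, Suc (c - 1)) \<in> dom h'"
    then have right: "(rT, c) \<in> dom h" using dom_nb col_ge2 by simp
    have "set_le (entries h (rT, c - 1)) (entries h (rT, c))"
      using semistandard_row[OF semistandard rT_in right] col_ge2 by simp
    moreover have "\<forall>y\<in>entries h (rT, c). bU \<le> y"
      using semistandard_col[OF semistandard cell_in right rT_gt] bU_in_entries
      by (auto simp: set_less_def less_imp_le)
    ultimately show "set_le (entries h' (rT, c - 1)) (entries h' (rT, Suc (c - 1)))"
      unfolding E using entries_nb[of "(rT, c)"] col_ge2 by simp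
  next
    assume "(rT - 1, c - 1) \<in> dom h'"
    then have "set_less (entries h (rT - 1, c - 1)) (entries h (rT, c - 1))"
      using col[of "rT - 1"] rT_gt dom_nb by simp
    then show "set_less (entries h' (rT - 1, c - 1)) (entries h' (rT, c - 1))"
      using set_less_insert_above[OF _ hk_in_entries[of h "(rT, c - 1)"] hk_V_le_bU] entries_nb[of "(rT - 1, c - 1)"] E
      by simp
  next
    assume "(Suc rT, c - 1) \<in> dom h'"
    then have above: "(Suc rT, c - 1) \<in> dom h" using dom_nb by simp
    then show "set_less (entries h' (rT, c - 1)) (entries h' (Suc rT, c - 1))"
      using semistandard_col[OF semistandard rT_in above] above_rT_gt[OF above] entries_nb
      unfolding E by simp
  qed
qed

lemma valid_merged_hook:
  assumes moved: "set moved \<subseteq> set (leg U)" "distinct moved"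
  shows "valid_hook (Hook (hk W) (sort (leg W @ moved)) (arm W @ [hk U]))"
proof -
  have valid_W: "valid_hook W" using semistandard_valid[OF semistandard left_in] .
  have W_le_U: "y \<in> entries h (r, c - 1) \<Longrightarrow> y \<le> hk U" for y
    using row_W_U by (simp add: set_le_def)
  have leg_W: "hk W < y \<and> y \<le> hk U" if "y \<in> set (leg W)" for y
    using that valid_W W_le_U[of y] by (simp add: valid_hook_def entries_def hentries_def)
  have arm_W: "y \<le> hk U" if "y \<in> set (arm W)" for y
    using that W_le_U[of y] by (simp add: entries_def hentries_def)
  have hk_W: "hk W \<le> hk U" using W_le_U by simp
  have moved_gt: "hk U < y" if "y \<in> set moved" for y
    using that moved(1) valid_U by (auto simp: valid_hook_def)
  have "distinct (leg W @ moved)"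
    using valid_W moved(2) leg_W moved_gt by (fastforce simp: valid_hook_def strict_sorted_iff)
  then have "sorted_wrt (<) (sort (leg W @ moved))" by (simp add: strict_sorted_iff)
  moreover have "\<forall>y\<in>set (sort (leg W @ moved)). hk W < y"
    using leg_W moved_gt hk_W by fastforce
  moreover have "sorted (arm W @ [hk U])" "\<forall>y\<in>set (arm W @ [hk U]). hk W \<le> y"
    using valid_W arm_W hk_W by (auto simp: valid_hook_def sorted_append)
  ultimately show ?thesis using valid_W by (simp add: valid_hook_def)
qed

lemma merged_hook_le_bU:
  assumes "\<forall>y\<in>set moved. y \<le> bU"
  shows "\<forall>y\<in>hentries (Hook (hk W) (sort (leg W @ moved)) (arm W @ [hk U])). y \<le> bU"
proof -
  have "y \<le> hk U" if "y \<in> entries h (r, c - 1)" for y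
    using row_W_U that by (simp add: set_le_def)
  then show ?thesis
    using assms hk_U_le_bU by (auto simp: hentries_def entries_def intro: order_trans)
qed

lemma fits_at_same_row:
  assumes same_row: "rT = r"
    and moved: "set moved \<subseteq> set (leg U)" "\<forall>y\<in>set moved. y \<le> bU" "distinct moved"
    and at_W: "h' (r, c - 1) = Some (Hook (hk W) (sort (leg W @ moved)) (arm W @ [hk U]))"
    and unchanged: "\<And>p. p \<noteq> (r, c - 1) \<Longrightarrow> p \<noteq> (r,c) \<Longrightarrow> h' p = h p"
    and right: "(r,c) \<in> dom h' \<Longrightarrow> \<forall>y\<in>entries h' (r,c). bU \<le> y"
  shows "fits_at h' (r, c - 1)"
proof -
  have nb: "h' p = h p" if "p \<in> {(r, c - 1 - 1), (r - 1, c - 1), (Suc r, c - 1)}" for p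
    using that col_ge2 r_pos by (auto intro!: unchanged)
  have dom_nb: "p \<in> dom h' \<longleftrightarrow> p \<in> dom h" and entries_nb: "entries h' p = entries h p"
    if "p \<in> {(r, c - 1 - 1), (r - 1, c - 1), (Suc r, c - 1)}" for p
    using nb[OF that] by (simp_all add: domIff entries_def)
  have E_sub: "entries h' (r, c - 1) \<subseteq> entries h (r, c - 1) \<union> entries h (r,c)"
    using at_W moved(1) by (auto simp: entries_def hentries_def)
  have E_le_bU: "y \<in> entries h' (r, c - 1) \<Longrightarrow> y \<le> bU" for y
    using at_W merged_hook_le_bU[OF moved(2)] by (simp add: entries_def)
  show ?thesis
    unfolding fits_at.simps
  proof (intro conjI impI)
    show "valid_hook (the (h' (r, c - 1)))" using at_W valid_merged_hook[OF moved(1,3)] by simp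
  next
    assume "(r, c - 1 - 1) \<in> dom h'"
    then have left: "(r, c - 1 - 1) \<in> dom h" using dom_nb by simp
    have "set_le (entries h (r, c - 1 - 1)) (entries h (r, c - 1) \<union> entries h (r,c))"
      using semistandard_row[OF semistandard left left_in] semistandard_row[OF semistandard left cell_in]
        col_ge2 by simp
    then show "set_le (entries h' (r, c - 1 - 1)) (entries h' (r, c - 1))"
      using set_le_subset[OF _ subset_refl E_sub] entries_nb[of "(r, c - 1 - 1)"] by simp
  next
    assume "(r, Suc (c - 1)) \<in> dom h'"
    moreover have "Suc (c - 1) = c" using col_ge2 by simp
    ultimately have "\<forall>y\<in>entries h' (r, Suc (c - 1)). bU \<le> y" using right by simp
    then show "set_le (entries h' (r, c - 1)) (entries h' (r, Suc (c - 1)))"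
      using E_le_bU unfolding set_le_def by (blast intro: order_trans)
  next
    assume "(r - 1, c - 1) \<in> dom h'"
    then have below: "(r - 1, c - 1) \<in> dom h" using dom_nb by simp
    have "set_less (entries h (r - 1, c - 1)) (entries h (r, c - 1))"
      using semistandard_col[OF semistandard below left_in] r_pos by simp
    moreover from this have "set_less (entries h (r - 1, c - 1)) (entries h (r,c))"
      using row_W_U hk_in_entries by (rule set_less_le_trans)
    ultimately have "set_less (entries h (r - 1, c - 1)) (entries h (r, c - 1) \<union> entries h (r,c))"
      by simp
    then show "set_less (entries h' (r - 1, c - 1)) (entries h' (r, c - 1))"
      using set_less_subset[OF _ subset_refl E_sub] entries_nb[of "(r - 1, c - 1)"] by simp
  next
    assume "(Suc r, c - 1) \<in> dom h'"
    then have above: "(Suc r, c - 1) \<in> dom h" using dom_nb by simp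
    then have "\<forall>y\<in>entries h' (Suc r, c - 1). bU < y"
      using above_rT_gt[OF above] same_row entries_nb by simp
    then show "set_less (entries h' (r, c - 1)) (entries h' (Suc r, c - 1))"
      using E_le_bU unfolding set_less_def by (blast intro: le_less_trans)
  qed
qed

lemma fits_at_shrunk:
  assumes at_U: "h' (r,c) = Some B" and valid: "valid_hook B" and sub: "hentries B \<subseteq> entries h (r,c)"
    and unchanged: "\<And>p. p \<in> {(r, Suc c), (r - 1, c), (Suc r, c)} \<Longrightarrow> h' p = h p"
    and left: "(r, c - 1) \<in> dom h' \<Longrightarrow> set_le (entries h' (r, c - 1)) (hentries B)"
  shows "fits_at h' (r,c)"
proof -
  have dom_nb: "p \<in> dom h' \<longleftrightarrow> p \<in> dom h" and entries_nb: "entries h' p = entries h p"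
    if "p \<in> {(r, Suc c), (r - 1, c), (Suc r, c)}" for p
    using unchanged[OF that] by (simp_all add: domIff entries_def)
  have E: "entries h' (r,c) = hentries B" using at_U by (simp add: entries_def)
  show ?thesis
    unfolding fits_at.simps E
  proof (intro conjI impI)
    show "valid_hook (the (h' (r,c)))" using at_U valid by simp
    show "set_le (entries h' (r, c - 1)) (hentries B)" if "(r, c - 1) \<in> dom h'"
      using left[OF that] .
    show "set_le (hentries B) (entries h' (r, Suc c))" if "(r, Suc c) \<in> dom h'"
      using that semistandard_row[OF semistandard cell_in, of "Suc c"] dom_nb entries_nb sub
      by (auto intro: set_le_subset)
    show "set_less (entries h' (r - 1, c)) (hentries B)" if "(r - 1, c) \<in> dom h'"
      using that semistandard_col[OF semistandard _ cell_in, of "r - 1"] dom_nb entries_nb sub r_pos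
      by (auto intro: set_less_subset)
    show "set_less (hentries B) (entries h' (Suc r, c))" if "(Suc r, c) \<in> dom h'"
      using that semistandard_col[OF semistandard cell_in, of "Suc r"] dom_nb entries_nb sub
      by (auto intro: set_less_subset)
  qed
qed

definition replaced_ext_leg :: "nat \<Rightarrow> nat list" where
  "replaced_ext_leg m = map (\<lambda>y. if y = bU then m else y) (ext_leg U)"

lemma replaced_ext_leg_sorted:
  assumes arm: "arm U = [m]"
  shows "sorted_wrt (<) (replaced_ext_leg m)"
  unfolding replaced_ext_leg_def
proof (rule sorted_wrt_map_mono)
  show "sorted_wrt (<) (ext_leg U)" using valid_hook_ext_leg[OF valid_U] .
  fix y z assume yz: "y \<in> set (ext_leg U)" "z \<in> set (ext_leg U)" "y < z"
  show "(if y = bU then m else y) < (if z = bU then m else z)"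
  proof (cases "y = bU")
    case True
    then have "\<not> z \<le> m" using bU_max_arm[OF arm yz(2)] yz(3) by auto
    then show ?thesis using True yz(3) by auto
  next
    case False
    then show ?thesis using yz bU_le_arm[OF arm] by auto
  qed
qed

lemma replaced_ext_leg_subset: "arm U = [m] \<Longrightarrow> set (replaced_ext_leg m) \<subseteq> entries h (r,c)"
  by (auto simp: replaced_ext_leg_def entries_def hentries_def ext_leg_def)

lemma mem_replaced_ext_leg: "m \<in> set (replaced_ext_leg m)"
  using bU_in_ext_leg by (force simp: replaced_ext_leg_def)

lemma replaced_ext_leg_ne: "replaced_ext_leg m \<noteq> []"
  by (simp add: replaced_ext_leg_def ext_leg_def)

lemma semistandard_bump_corner_new_row:
  assumes corner: "arm U = []" and new_row: "rT \<noteq> r" and arm_V: "\<forall>a\<in>set (arm V). a \<le> bU"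
  shows "semistandard (fst (crowd_bump (h,(r,c))))"
proof -
  let ?h' = "h((rT, c - 1) := Some (Hook (hk V) (leg V) (arm V @ [bU])), (r,c) := None)"
  have ne: "(rT, c - 1) \<noteq> (r,c)" using col_ge2 by auto
  have dom: "dom ?h' = dom h - {(r,c)}" using rT_in ne by auto
  have "semistandard ?h'"
  proof (rule semistandard_update[OF semistandard, where C = "{(rT, c - 1), (r,c)}"])
    show "dom ?h' \<subseteq> dom h" using dom by simp
    have "(Suc r, c) \<notin> dom h" "(r, Suc c) \<notin> dom h" using site corner by auto
    then show "lower_closed (dom ?h')"
      unfolding dom by (rule lower_closed_remove_corner[OF semistandard_lower_closed[OF semistandard]])
    show "?h' p = h p" if "p \<notin> {(rT, c - 1), (r,c)}" for p using that by simp
    show "fits_at ?h' p" if "p \<in> {(rT, c - 1), (r,c)}" "p \<in> dom ?h'" for p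
    proof -
      have "fits_at ?h' (rT, c - 1)" by (rule fits_at_new_row[OF new_row arm_V]) (use ne in auto)
      then show ?thesis using that by auto
    qed
  qed
  then show ?thesis using crowd_bump_corner_new_row[OF corner new_row] by simp
qed

lemma semistandard_bump_corner_same_row:
  assumes corner: "arm U = []" and same_row: "rT = r"
  shows "semistandard (fst (crowd_bump (h,(r,c))))"
proof -
  let ?h' = "h((r, c - 1) := Some (Hook (hk W) (sort (leg W @ leg U)) (arm W @ [hk U])), (r,c) := None)"
  have ne: "(r, c - 1) \<noteq> (r,c)" using col_ge2 by auto
  have dom: "dom ?h' = dom h - {(r,c)}" using left_in ne by auto
  have "semistandard ?h'"
  proof (rule semistandard_update[OF semistandard, where C = "{(r, c - 1), (r,c)}"])
    show "dom ?h' \<subseteq> dom h" using dom by simp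
    have "(Suc r, c) \<notin> dom h" "(r, Suc c) \<notin> dom h" using site corner by auto
    then show "lower_closed (dom ?h')"
      unfolding dom by (rule lower_closed_remove_corner[OF semistandard_lower_closed[OF semistandard]])
    show "?h' p = h p" if "p \<notin> {(r, c - 1), (r,c)}" for p using that by simp
    show "fits_at ?h' p" if "p \<in> {(r, c - 1), (r,c)}" "p \<in> dom ?h'" for p
    proof -
      have "\<forall>y\<in>set (leg U). y \<le> bU"
        using bU_max_corner[OF corner] by (auto simp: entries_def hentries_def)
      moreover have "distinct (leg U)" using valid_U by (simp add: valid_hook_def strict_sorted_iff)
      ultimately have "fits_at ?h' (r, c - 1)"
        by (intro fits_at_same_row[OF same_row]) (use ne in simp_all)
      then show ?thesis using that by auto
    qed
  qed
  then show ?thesis using crowd_bump_corner_same_row[OF corner same_row] by simp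
qed

lemma semistandard_bump_arm_same_row:
  assumes arm: "arm U = [m]" and same_row: "rT = r"
  shows "semistandard (fst (crowd_bump (h,(r,c))))"
proof -
  define moved where "moved = filter (\<lambda>y. hk U < y \<and> y \<le> m) (leg U)"
  define kept where "kept = filter (\<lambda>y. \<not> (hk U < y \<and> y \<le> m)) (leg U)"
  define A where "A = Hook (hk W) (sort (leg W @ moved)) (arm W @ [hk U])"
  let ?h' = "h((r, c - 1) := Some A, (r,c) := Some (Hook m kept []))"
  have ne: "(r, c - 1) \<noteq> (r,c)" using col_ge2 by auto
  have dom: "dom ?h' = dom h" using left_in cell_in by auto
  have leg_U_gt: "y \<in> set (leg U) \<Longrightarrow> hk U < y" for y
    using valid_U by (simp add: valid_hook_def)
  have moved_le: "\<forall>y\<in>set moved. y \<le> bU"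
    using bU_max_arm[OF arm] by (auto simp: moved_def ext_leg_def)
  have kept_gt: "\<forall>y\<in>set kept. m < y" using leg_U_gt by (auto simp: kept_def)
  have A_le: "\<forall>y\<in>hentries A. y \<le> bU" unfolding A_def by (rule merged_hook_le_bU[OF moved_le])
  have B_ge: "\<forall>y\<in>hentries (Hook m kept []). bU \<le> y"
    using kept_gt bU_le_arm[OF arm] by (auto simp: hentries_def)
  have "semistandard ?h'"
  proof (rule semistandard_update[OF semistandard, where C = "{(r, c - 1), (r,c)}"])
    show "dom ?h' \<subseteq> dom h" using dom by simp
    show "lower_closed (dom ?h')" using dom semistandard_lower_closed[OF semistandard] by simp
    show "?h' p = h p" if "p \<notin> {(r, c - 1), (r,c)}" for p using that by simp
    have "fits_at ?h' (r, c - 1)"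
    proof (rule fits_at_same_row[OF same_row])
      show "set moved \<subseteq> set (leg U)" by (simp add: moved_def)
      show "\<forall>y\<in>set moved. y \<le> bU" by (rule moved_le)
      show "distinct moved" using valid_U by (simp add: moved_def valid_hook_def strict_sorted_iff)
      show "?h' (r, c - 1) = Some (Hook (hk W) (sort (leg W @ moved)) (arm W @ [hk U]))"
        using ne by (simp add: A_def)
      show "?h' p = h p" if "p \<noteq> (r, c - 1)" "p \<noteq> (r,c)" for p using that by simp
      show "\<forall>y\<in>entries ?h' (r,c). bU \<le> y" using B_ge by simp
    qed
    moreover have "fits_at ?h' (r,c)"
    proof (rule fits_at_shrunk)
      show "?h' (r,c) = Some (Hook m kept [])" by simp
      have "0 < m" using valid_hook_pos[OF valid_U, of m] arm by (simp add: hentries_def)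
      moreover have "sorted_wrt (<) kept"
        using valid_U by (simp add: kept_def valid_hook_def sorted_wrt_filter)
      ultimately show "valid_hook (Hook m kept [])" using kept_gt by (simp add: valid_hook_Hook)
      show "hentries (Hook m kept []) \<subseteq> entries h (r,c)"
        using arm by (auto simp: kept_def entries_def hentries_def)
      show "?h' p = h p" if "p \<in> {(r, Suc c), (r - 1, c), (Suc r, c)}" for p
        using that col_ge2 r_pos by auto
      have "entries ?h' (r, c - 1) = hentries A" using ne by simp
      then show "set_le (entries ?h' (r, c - 1)) (hentries (Hook m kept []))"
        using A_le B_ge unfolding set_le_def by (auto intro: order_trans)
    qed
    ultimately show "fits_at ?h' p" if "p \<in> {(r, c - 1), (r,c)}" "p \<in> dom ?h'" for p
      using that by blast
  qed
  moreover have "fst (crowd_bump (h,(r,c))) = ?h'"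
    unfolding A_def moved_def kept_def by (rule crowd_bump_arm_same_row[OF arm same_row])
  ultimately show ?thesis by simp
qed

lemma semistandard_bump_arm_new_row:
  assumes arm: "arm U = [m]" and new_row: "rT \<noteq> r" and arm_V: "\<forall>a\<in>set (arm V). a \<le> bU"
  shows "semistandard (fst (crowd_bump (h,(r,c))))"
proof -
  define B where "B = Hook (hd (replaced_ext_leg m)) (tl (replaced_ext_leg m)) []"
  let ?h' = "h((rT, c - 1) := Some (Hook (hk V) (leg V) (arm V @ [bU])), (r,c) := Some B)"
  have ne: "(rT, c - 1) \<noteq> (r,c)" using col_ge2 by auto
  have dom: "dom ?h' = dom h" using rT_in cell_in by auto
  have EB: "hentries B = set (replaced_ext_leg m)"
    unfolding B_def using hentries_of_list[OF replaced_ext_leg_ne] .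
  have "semistandard ?h'"
  proof (rule semistandard_update[OF semistandard, where C = "{(rT, c - 1), (r,c)}"])
    show "dom ?h' \<subseteq> dom h" using dom by simp
    show "lower_closed (dom ?h')" using dom semistandard_lower_closed[OF semistandard] by simp
    show "?h' p = h p" if "p \<notin> {(rT, c - 1), (r,c)}" for p using that by simp
    have "fits_at ?h' (rT, c - 1)" by (rule fits_at_new_row[OF new_row arm_V]) (use ne in auto)
    moreover have "fits_at ?h' (r,c)"
    proof (rule fits_at_shrunk)
      show "?h' (r,c) = Some B" by simp
      show sub: "hentries B \<subseteq> entries h (r,c)"
        unfolding EB using replaced_ext_leg_subset[OF arm] .
      have "hd (replaced_ext_leg m) \<in> entries h (r,c)"
        using sub EB hd_in_set[OF replaced_ext_leg_ne] by blast
      then show "valid_hook B"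
        unfolding B_def using valid_hook_pos[OF valid_U] replaced_ext_leg_sorted[OF arm]
        by (intro valid_hook_of_strict_list replaced_ext_leg_ne) (simp_all add: entries_def)
      show "?h' p = h p" if "p \<in> {(r, Suc c), (r - 1, c), (Suc r, c)}" for p
        using that col_ge2 r_pos by auto
      have "(r, c - 1) \<noteq> (rT, c - 1)" "(r, c - 1) \<noteq> (r,c)" using new_row col_ge2 by auto
      then show "set_le (entries ?h' (r, c - 1)) (hentries B)"
        using set_le_subset[OF row_W_U subset_refl sub] by simp
    qed
    ultimately show "fits_at ?h' p" if "p \<in> {(rT, c - 1), (r,c)}" "p \<in> dom ?h'" for p
      using that by blast
  qed
  moreover have "fst (crowd_bump (h,(r,c))) = ?h'"
    unfolding B_def replaced_ext_leg_def by (rule crowd_bump_arm_new_row[OF arm new_row])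
  ultimately show ?thesis by simp
qed

lemma semistandard_crowd_bump:
  assumes "rT \<noteq> r \<Longrightarrow> \<forall>a\<in>set (arm V). a \<le> bU"
  shows "semistandard (fst (crowd_bump (h,(r,c))))"
proof (cases "arm U = []")
  case True
  then show ?thesis
    using assms semistandard_bump_corner_same_row semistandard_bump_corner_new_row by blast
next
  case False
  then obtain m where "arm U = [m]" using site by auto
  then show ?thesis
    using assms semistandard_bump_arm_same_row semistandard_bump_arm_new_row by blast
qed

abbreviation "bumped \<equiv> fst (crowd_bump (h,(r,c)))"

lemma target_ne_cell: "(rT, c - 1) \<noteq> (r,c)"
  using col_ge2 by auto

lemma bumped_other:
  assumes "p \<noteq> (r,c)" "p \<noteq> (rT, c - 1)"
  shows "bumped p = h p"
proof (cases "arm U = []")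
  case True
  then show ?thesis
    using assms crowd_bump_corner_same_row[of h r c, OF True] crowd_bump_corner_new_row[of h r c, OF True]
    by (cases "rT = r") auto
next
  case False
  then obtain m where m: "arm U = [m]" using site by auto
  then show ?thesis
    using assms crowd_bump_arm_same_row[of h r c, OF m] crowd_bump_arm_new_row[of h r c, OF m]
    by (cases "rT = r") auto
qed

lemma bumped_target:
  "\<exists>L. bumped (rT, c - 1) = Some (Hook (hk V) L (arm V @ [qT])) \<and> set (leg V) \<subseteq> set L"
proof (cases "arm U = []")
  case True
  then show ?thesis
    using crowd_bump_corner_same_row[of h r c, OF True] crowd_bump_corner_new_row[of h r c, OF True]
      target_ne_cell qT_eq
    by (cases "rT = r") auto
next
  case False
  then obtain m where m: "arm U = [m]" using site by auto
  then show ?thesis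
    using crowd_bump_arm_same_row[of h r c, OF m] crowd_bump_arm_new_row[of h r c, OF m]
      target_ne_cell qT_eq
    by (cases "rT = r") auto
qed

lemma bumped_corner_removed: "arm U = [] \<Longrightarrow> bumped (r,c) = None"
  using crowd_bump_corner_same_row[of h r c] crowd_bump_corner_new_row[of h r c] by (cases "rT = r") auto

lemma bumped_arm_cell:
  assumes arm: "arm U = [m]"
  shows "\<exists>U'. bumped (r,c) = Some U' \<and> arm U' = [] \<and> m \<in> set (ext_leg U')"
proof (cases "rT = r")
  case True
  then show ?thesis using crowd_bump_arm_same_row[of h r c m, OF arm] by (simp add: ext_leg_def)
next
  case False
  have "m \<in> set (hd (replaced_ext_leg m) # tl (replaced_ext_leg m))"
    using mem_replaced_ext_leg replaced_ext_leg_ne by simp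
  then show ?thesis
    using crowd_bump_arm_new_row[of h r c m, OF arm False] by (simp add: ext_leg_def replaced_ext_leg_def)
qed

lemma bumped_ext_leg_mono:
  "p \<noteq> (r,c) \<Longrightarrow> set (ext_leg (the (h p))) \<subseteq> set (ext_leg (the (bumped p)))"
  using bumped_target bumped_other by (cases "p = (rT, c - 1)") (auto simp: ext_leg_def)

lemma bumped_entries_mono: "p \<noteq> (r,c) \<Longrightarrow> entries h p \<subseteq> entries bumped p"
  using bumped_target bumped_other
  by (cases "p = (rT, c - 1)") (auto simp: entries_def hentries_def)

lemma dom_bumped_other:
  assumes "p \<noteq> (r,c)"
  shows "p \<in> dom bumped \<longleftrightarrow> p \<in> dom h"
proof (cases "p = (rT, c - 1)")
  case True
  then show ?thesis using bumped_target rT_in by auto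
qed (use bumped_other assms in \<open>simp add: domIff\<close>)

lemma dom_bumped: "dom bumped = (if arm U = [] then dom h - {(r,c)} else dom h)"
proof (cases "arm U = []")
  case True
  have "p \<in> dom bumped \<longleftrightarrow> p \<in> dom h - {(r,c)}" for p
    using dom_bumped_other[of p] bumped_corner_removed[OF True] by (cases "p = (r,c)") auto
  then have "dom bumped = dom h - {(r,c)}" by blast
  then show ?thesis using True by simp
next
  case False
  then obtain m where "arm U = [m]" using site by auto
  then have "(r,c) \<in> dom bumped" using bumped_arm_cell by blast
  then have "p \<in> dom bumped \<longleftrightarrow> p \<in> dom h" for p
    using dom_bumped_other[of p] cell_in by (cases "p = (r,c)") auto
  then have "dom bumped = dom h" by blast
  then show ?thesis using False by simp
qed

text \<open>This is what keeps a crowding path weakly above the previous path with the same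
  destination column.\<close>

lemma path_below_bump:
  assumes "(i, c) \<in> dom h" "i \<le> r" "y \<in> set (ext_leg (the (h (i, c))))"
    and "\<And>m. arm U = [m] \<Longrightarrow> i = r \<Longrightarrow> y \<le> m"
    and "(i', c - 1) \<in> dom h" "y' \<in> entries h (i', c - 1)" "y' \<le> y"
  shows "i' \<le> rT" and "i' = rT \<Longrightarrow> y' \<le> qT"
proof -
  have y_entry: "y \<in> entries h (i, c)" using assms(3) by (simp add: entries_def hentries_ext_leg_arm)
  have y_le_bU: "y \<le> bU"
  proof (cases "i = r")
    case True
    show ?thesis
    proof (cases "arm U = []")
      case True
      then show ?thesis using bU_max_corner y_entry \<open>i = r\<close> by simp
    next
      case False
      then obtain m where m: "arm U = [m]" using site by auto
      then show ?thesis using bU_max_arm[OF m] assms(3,4) True by simp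
    qed
  next
    case False
    then have "i < r" using assms(2) by simp
    then have "y < hk U"
      using semistandard_col[OF semistandard assms(1) cell_in] y_entry by (simp add: set_less_def)
    then show ?thesis using hk_U_le_bU by simp
  qed
  have "hk (the (h (i', c - 1))) \<le> y'"
    using valid_hook_hk_le[OF semistandard_valid[OF semistandard assms(5)]] assms(6)
    by (simp add: entries_def)
  then show "i' \<le> rT" using rT_greatest[OF assms(5)] assms(7) y_le_bU by simp
  show "y' \<le> qT" if "i' = rT"
  proof (cases "rT = r")
    case True
    have "set_le (entries h (r, c - 1)) (entries h (r,c))" by (rule row_W_U)
    then have "y' \<le> hk U" using assms(6) that True by (simp add: set_le_def)
    then show ?thesis using qT_eq True by simp
  next
    case False
    then show ?thesis using qT_eq y_le_bU assms(7) by simp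
  qed
qed

end

section \<open>Crowding paths and the crowding invariant\<close>

text \<open>A path \<open>p\<close> picks in each column \<open>i\<close> a row \<open>fst (p i)\<close> and an entry \<open>snd (p i)\<close> of
  that cell. The \<open>trail\<close> records the values deposited so far by the current crowding path,
  which started in column \<open>c0\<close>; \<open>above_path\<close> says that the current position lies weakly
  above the path of the previous cell with the same destination column \<open>d\<close>, and
  \<open>arms_bounded\<close> that the other arms in column \<open>d\<close> lie weakly below that path's endpoint.\<close>

definition path_through :: "hvt \<Rightarrow> nat \<Rightarrow> nat \<Rightarrow> (nat \<Rightarrow> nat \<times> nat) \<Rightarrow> bool" where
  "path_through h d k p \<longleftrightarrow>
     (\<forall>i. d \<le> i \<and> i \<le> k \<longrightarrow> (fst (p i), i) \<in> dom h)
   \<and> (\<forall>i. d < i \<and> i \<le> k \<longrightarrow> snd (p i) \<in> set (ext_leg (the (h (fst (p i), i)))))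
   \<and> (\<forall>i. d \<le> i \<and> i < k \<longrightarrow> snd (p i) \<le> snd (p (Suc i)))
   \<and> snd (p d) \<in> entries h (fst (p d), d)"

definition arms_bounded :: "hvt \<Rightarrow> nat \<Rightarrow> cell \<Rightarrow> (nat \<times> nat) option \<Rightarrow> bool" where
  "arms_bounded h d cur bound \<longleftrightarrow>
     (\<forall>i. (i,d) \<in> dom h \<and> (i,d) \<noteq> cur \<and> arm (the (h (i,d))) \<noteq> [] \<longrightarrow>
       (case bound of None \<Rightarrow> False
        | Some (\<rho>, q) \<Rightarrow> i \<le> \<rho> \<and> (i = \<rho> \<longrightarrow> (\<forall>a\<in>set (arm (the (h (i,d)))). a \<le> q))))"

definition above_path :: "hvt \<Rightarrow> nat \<Rightarrow> cell \<Rightarrow> nat \<Rightarrow> (nat \<Rightarrow> nat \<times> nat) \<Rightarrow> bool" where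
  "above_path h d cur s p \<longleftrightarrow> path_through h d (snd cur) p \<and> fst (p (snd cur)) \<le> fst cur
     \<and> (0 < s \<and> fst (p (snd cur)) = fst cur \<longrightarrow> snd (p (snd cur)) \<le> last (arm (the (h cur))))
     \<and> arms_bounded h d cur (Some (p d))"

definition trail :: "hvt \<Rightarrow> nat \<Rightarrow> cell \<Rightarrow> nat \<Rightarrow> (nat \<Rightarrow> nat \<times> nat) \<Rightarrow> bool" where
  "trail h c0 cur s t \<longleftrightarrow> (0 < s \<longrightarrow> t (snd cur) = (fst cur, last (arm (the (h cur)))))
    \<and> (\<forall>i. snd cur < i \<and> i < c0 \<longrightarrow>
          (fst (t i), i) \<in> dom h \<and> snd (t i) \<in> set (ext_leg (the (h (fst (t i), i)))))
    \<and> (\<forall>i. snd cur \<le> i \<and> Suc i < c0 \<longrightarrow> snd (t i) \<le> snd (t (Suc i)))"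

lemma path_through_entry:
  assumes "path_through h d k p" "d \<le> i" "i \<le> k"
  shows "snd (p i) \<in> entries h (fst (p i), i)"
proof (cases "i = d")
  case False
  then have "snd (p i) \<in> set (ext_leg (the (h (fst (p i), i))))"
    using assms unfolding path_through_def by auto
  then show ?thesis by (simp add: entries_def hentries_ext_leg_arm)
qed (use assms in \<open>simp add: path_through_def\<close>)

lemma arms_bounded_cong:
  assumes "arms_bounded h d cur b"
    and "\<And>i. (i,d) \<in> dom h' \<Longrightarrow> (i,d) \<noteq> cur' \<Longrightarrow> (i,d) \<in> dom h \<and> (i,d) \<noteq> cur \<and> h' (i,d) = h (i,d)"
  shows "arms_bounded h' d cur' b"
  unfolding arms_bounded_def
proof (intro allI impI)
  fix i assume i: "(i,d) \<in> dom h' \<and> (i,d) \<noteq> cur' \<and> arm (the (h' (i,d))) \<noteq> []"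
  then have "(i,d) \<in> dom h \<and> (i,d) \<noteq> cur \<and> arm (the (h (i,d))) \<noteq> []" and eq: "h' (i,d) = h (i,d)"
    using assms(2)[of i] by auto
  then have "case b of None \<Rightarrow> False
      | Some (\<rho>, q) \<Rightarrow> i \<le> \<rho> \<and> (i = \<rho> \<longrightarrow> (\<forall>a\<in>set (arm (the (h (i,d)))). a \<le> q))"
    using assms(1) unfolding arms_bounded_def by blast
  then show "case b of None \<Rightarrow> False
      | Some (\<rho>, q) \<Rightarrow> i \<le> \<rho> \<and> (i = \<rho> \<longrightarrow> (\<forall>a\<in>set (arm (the (h' (i,d)))). a \<le> q))"
    unfolding eq .
qed

lemma trail_start: "trail h (snd cur) cur 0 t"
  by (auto simp: trail_def)

lemma path_through_trail:
  assumes t: "trail h c0 (\<sigma>,k) s t" and s: "0 < s" and cur: "(\<sigma>,k) \<in> dom h"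
    and arm: "arm (the (h (\<sigma>,k))) \<noteq> []" and c1: "c1 < c0"
  shows "path_through h k c1 t"
  unfolding path_through_def
proof (intro conjI allI impI)
  have t_k: "t k = (\<sigma>, last (arm (the (h (\<sigma>,k)))))" using t s unfolding trail_def by simp
  fix i assume "k \<le> i \<and> i \<le> c1"
  then show "(fst (t i), i) \<in> dom h" using t t_k cur c1 unfolding trail_def by (cases "i = k") auto
next
  fix i assume "k < i \<and> i \<le> c1"
  then show "snd (t i) \<in> set (ext_leg (the (h (fst (t i), i))))" using t c1 unfolding trail_def by auto
next
  fix i assume "k \<le> i \<and> i < c1"
  then show "snd (t i) \<le> snd (t (Suc i))" using t c1 unfolding trail_def by auto
next
  show "snd (t k) \<in> entries h (fst (t k), k)"
    using t s arm unfolding trail_def by (simp add: entries_def hentries_def)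
qed

lemma sorted_le_last: "sorted xs \<Longrightarrow> a \<in> set xs \<Longrightarrow> a \<le> last xs"
  by (induction xs rule: rev_induct) (auto simp: sorted_append)

locale crowding =
  fixes mu lam :: "nat list" and S :: hvt and F :: "cell \<Rightarrow> nat"
  assumes partition_mu: "partition mu" and partition_lam: "partition lam"
    and set_valued_S: "set_valued_of_shape mu S" and flagged_F: "col_flagged_incr mu lam F"
begin

abbreviation "co \<equiv> crowding_order mu lam F"
abbreviation "cells \<equiv> skew mu lam"

abbreviation "remaining j \<equiv> young mu - set (take j co)"

definition key :: "cell \<Rightarrow> int \<times> int" where
  "key p = (int (snd p) - int (F p), - int (snd p))"

definition dest_col :: "cell \<Rightarrow> nat" where
  "dest_col p = snd p - F p"

lemma co_eq_sort_key: "co = sort_key key (sorted_list_of_set cells)"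
proof -
  have "(\<lambda>(r,c). (int c - int (F (r,c)), - int c)) = key" by (auto simp: key_def fun_eq_iff)
  then show ?thesis unfolding crowding_order_def by simp
qed

lemma finite_cells: "finite cells"
  unfolding skew_def using finite_young by simp

lemma set_co: "set co = cells"
  unfolding co_eq_sort_key using finite_cells by simp

lemma distinct_co: "distinct co"
  unfolding co_eq_sort_key using finite_cells by simp

lemma length_co: "length co = card cells"
  using distinct_card[OF distinct_co] set_co by simp

lemma co_nth_in_cells: "i < length co \<Longrightarrow> co ! i \<in> cells"
  using set_co nth_mem by blast

lemma F_bounds: "(r,c) \<in> cells \<Longrightarrow> 0 < F (r,c) \<and> F (r,c) \<le> c - 1"
  using flagged_F unfolding col_flagged_incr_def by blast

lemma F_row_less: "(r,c) \<in> cells \<Longrightarrow> (r,c') \<in> cells \<Longrightarrow> c < c' \<Longrightarrow> F (r,c) < F (r,c')"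
  using flagged_F unfolding col_flagged_incr_def by blast

lemma F_col_less: "(r,c) \<in> cells \<Longrightarrow> (r',c) \<in> cells \<Longrightarrow> r < r' \<Longrightarrow> F (r,c) < F (r',c)"
  using flagged_F unfolding col_flagged_incr_def by blast

lemma cells_pos: "(r,c) \<in> cells \<Longrightarrow> 1 \<le> r \<and> 1 \<le> c"
  by (auto simp: skew_def young_def)

lemma dest_col_bounds: "p \<in> cells \<Longrightarrow> 1 \<le> dest_col p \<and> dest_col p < snd p"
  using F_bounds[of "fst p" "snd p"] by (cases p) (auto simp: dest_col_def)

lemma fst_key: "p \<in> cells \<Longrightarrow> fst (key p) = int (dest_col p)"
  using F_bounds[of "fst p" "snd p"] by (cases p) (auto simp: key_def dest_col_def)

lemma key_inj:
  assumes "p \<in> cells" "p' \<in> cells" "key p = key p'"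
  shows "p = p'"
proof (rule ccontr)
  obtain r c r' c' where pp: "p = (r,c)" "p' = (r',c')" by (cases p, cases p')
  assume "p \<noteq> p'"
  have c: "c' = c" using assms(3) pp by (simp add: key_def)
  then have "F (r,c) = F (r',c)" "r \<noteq> r'" using assms(3) pp \<open>p \<noteq> p'\<close> by (auto simp: key_def)
  then show False
    using F_col_less[of r c r'] F_col_less[of r' c r] assms(1,2) pp c by (cases "r < r'") auto
qed

lemma key_co_mono: "i \<le> i' \<Longrightarrow> i' < length co \<Longrightarrow> key (co ! i) \<le> key (co ! i')"
  using sorted_nth_mono[of "map key co" i i'] unfolding co_eq_sort_key by simp

lemma key_co_strict_mono: 
  assumes "i < i'" "i' < length co"
  shows "key (co ! i) < key (co ! i')"
proof -
  have "co ! i \<noteq> co ! i'" using distinct_co assms nth_eq_iff_index_eq by fastforce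
  then have "key (co ! i) \<noteq> key (co ! i')"
    using key_inj co_nth_in_cells assms by (meson order.strict_trans)
  then show ?thesis using key_co_mono[of i i'] assms by simp
qed

lemma mem_take_if_key_less:
  assumes "p \<in> cells" "key p < key (co ! j)" "j < length co"
  shows "p \<in> set (take j co)"
proof -
  obtain i where i: "i < length co" "co ! i = p" using assms(1) set_co by (metis in_set_conv_nth)
  have "i < j"
    using key_co_mono[of j i] i assms(2) by (cases "j \<le> i") auto
  then show ?thesis using i by (metis in_set_conv_nth length_take min_less_iff_conj nth_take)
qed

lemma dest_col_co_mono: 
  assumes "i \<le> i'" "i' < length co"
  shows "dest_col (co ! i) \<le> dest_col (co ! i')"
proof -
  have "fst (key (co ! i)) \<le> fst (key (co ! i'))"
    using key_co_mono[OF assms] by (cases "key (co ! i)", cases "key (co ! i')") auto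
  then show ?thesis using fst_key co_nth_in_cells assms by simp
qed

lemma same_dest_col_less:
  assumes "0 < j" "j < length co" "dest_col (co ! (j - 1)) = dest_col (co ! j)"
  shows "snd (co ! j) < snd (co ! (j - 1))"
proof -
  have "key (co ! (j - 1)) < key (co ! j)" using key_co_strict_mono assms by simp
  moreover have "fst (key (co ! (j - 1))) = fst (key (co ! j))"
    using fst_key co_nth_in_cells assms by simp
  ultimately have "snd (key (co ! (j - 1))) < snd (key (co ! j))"
    by (cases "key (co ! (j - 1))", cases "key (co ! j)") auto
  then show ?thesis by (simp add: key_def)
qed

text \<open>When its turn comes, the \<open>j\<close>-th cell of the crowding order is a corner of what remains:
  its upper and right neighbours have smaller destination columns, or the same destination
  column and a larger column index.\<close>

lemma co_nth_corner:
  assumes j: "j < length co" and p: "co ! j = (r,c)"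
  shows "(Suc r, c) \<notin> remaining j" "(r, Suc c) \<notin> remaining j"
proof -
  have cell: "(r,c) \<in> cells" using co_nth_in_cells[OF j] p by simp
  then have not_lam: "(r,c) \<notin> young lam" and pos: "1 \<le> r" "1 \<le> c"
    using cells_pos by (auto simp: skew_def)
  have lc: "lower_closed (young lam)" using lower_closed_young[OF partition_lam] .
  show "(Suc r, c) \<notin> remaining j"
  proof
    assume a: "(Suc r, c) \<in> remaining j"
    have "(Suc r, c) \<notin> young lam" using not_lam lower_closedD(3)[OF lc, of "Suc r" c r c] pos by auto
    then have above: "(Suc r, c) \<in> cells" using a by (simp add: skew_def)
    then have "key (Suc r, c) < key (co ! j)"
      using F_col_less[OF cell above] F_bounds[OF cell] F_bounds[OF above] p by (simp add: key_def)
    then show False using mem_take_if_key_less[OF above _ j] a by simp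
  qed
  show "(r, Suc c) \<notin> remaining j"
  proof
    assume a: "(r, Suc c) \<in> remaining j"
    have "(r, Suc c) \<notin> young lam" using not_lam lower_closedD(3)[OF lc, of r "Suc c" r c] pos by auto
    then have right: "(r, Suc c) \<in> cells" using a by (simp add: skew_def)
    then have "key (r, Suc c) < key (co ! j)"
      using F_row_less[OF cell right] F_bounds[OF cell] F_bounds[OF right] p by (simp add: key_def)
    then show False using mem_take_if_key_less[OF right _ j] a by simp
  qed
qed

lemma semistandard_S: "semistandard S"
  using set_valued_S hvt_of_shape_semistandard by (auto simp: set_valued_of_shape_def)

lemma dom_S: "dom S = young mu"
  using set_valued_S by (simp add: set_valued_of_shape_def hvt_of_shape_def)

lemma arm_S: "p \<in> dom S \<Longrightarrow> arm (the (S p)) = []"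
  using set_valued_S by (simp add: set_valued_of_shape_def)

definition same_dest :: "nat \<Rightarrow> bool" where
  "same_dest j \<longleftrightarrow> 0 < j \<and> dest_col (co ! (j - 1)) = dest_col (co ! j)"

definition crowding_inv :: "nat \<Rightarrow> nat \<Rightarrow> hvt \<times> cell \<Rightarrow> bool" where
  "crowding_inv j s hc \<longleftrightarrow> (case hc of (h, cur) \<Rightarrow>
     snd cur = snd (co ! j) - s \<and> semistandard h
   \<and> dom h = remaining j - (if s = 0 then {} else {co ! j}) \<and> cur \<in> dom h
   \<and> (s = 0 \<longrightarrow> cur = co ! j \<and> arm (the (h cur)) = [])
   \<and> (0 < s \<longrightarrow> arm (the (h cur)) \<noteq> [] \<and> (dest_col (co ! j) < snd cur \<longrightarrow> length (arm (the (h cur))) = 1))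
   \<and> (\<forall>i c. (i,c) \<in> dom h \<longrightarrow> dest_col (co ! j) < c \<longrightarrow> (i,c) \<noteq> cur \<longrightarrow> arm (the (h (i,c))) = [])
   \<and> (\<exists>t. trail h (snd (co ! j)) cur s t)
   \<and> (if same_dest j then \<exists>p. above_path h (dest_col (co ! j)) cur s p
      else arms_bounded h (dest_col (co ! j)) cur None))"

lemma crowding_inv_start:
  assumes "0 < length co"
  shows "crowding_inv 0 0 (S, co ! 0)"
proof -
  have "co ! 0 \<in> dom S" using co_nth_in_cells[OF assms] dom_S by (simp add: skew_def)
  moreover have "trail S (snd (co ! 0)) (co ! 0) 0 (\<lambda>_. (0,0))" by (rule trail_start)
  ultimately show ?thesis
    using semistandard_S dom_S arm_S by (auto simp: crowding_inv_def same_dest_def arms_bounded_def)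
qed

lemma co_nth_notin_take: "i < length co \<Longrightarrow> co ! i \<notin> set (take i co)"
  using set_take_disj_set_drop_if_distinct[OF distinct_co order_refl, of i]
  by (metis Cons_nth_drop_Suc disjoint_iff list.set_intros(1))

text \<open>When the next cell has the same destination column, the completed trail of the previous
  crowding path is the path the next one has to stay above.\<close>

lemma above_path_of_trail:
  assumes j: "Suc j < length co" and same: "same_dest (Suc j)"
    and inv: "crowding_inv j (F (co ! j)) (h, (\<sigma>,k))"
  shows "\<exists>p. above_path h (dest_col (co ! Suc j)) (co ! Suc j) 0 p"
proof -
  let ?d = "dest_col (co ! j)"
  obtain r1 c1 where next_cell: "co ! Suc j = (r1, c1)" by (cases "co ! Suc j")
  have jl: "j < length co" using j by simp
  have F_pos: "0 < F (co ! j)" using F_bounds co_nth_in_cells[OF jl] by (cases "co ! j") auto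
  have k: "k = ?d" and ss: "semistandard h" and dom_h: "dom h = remaining j - {co ! j}"
    and cur_in: "(\<sigma>,k) \<in> dom h" and arm_cur: "arm (the (h (\<sigma>,k))) \<noteq> []"
    and prev: "if same_dest j then \<exists>p. above_path h ?d (\<sigma>,k) (F (co ! j)) p
               else arms_bounded h ?d (\<sigma>,k) None"
    using inv F_pos unfolding crowding_inv_def by (auto simp: dest_col_def)
  obtain t where t: "trail h (snd (co ! j)) (\<sigma>,k) (F (co ! j)) t"
    using inv unfolding crowding_inv_def by auto
  have d1: "dest_col (co ! Suc j) = ?d" using same by (simp add: same_dest_def)
  have c1_lt: "c1 < snd (co ! j)" using same_dest_col_less[of "Suc j"] j d1 next_cell by simp
  have t_k: "t k = (\<sigma>, last (arm (the (h (\<sigma>,k)))))" using t F_pos unfolding trail_def by simp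
  have path: "path_through h ?d c1 t"
    using path_through_trail[OF t F_pos cur_in arm_cur c1_lt] k by simp
  have "fst (t c1) \<le> r1"
  proof (rule ccontr)
    assume "\<not> fst (t c1) \<le> r1"
    moreover have "(fst (t c1), c1) \<in> dom h" using path d1 next_cell dest_col_bounds[of "co ! Suc j"]
        co_nth_in_cells[OF j] unfolding path_through_def by auto
    ultimately have "(Suc r1, c1) \<in> dom h"
      using lower_closedD(3)[OF semistandard_lower_closed[OF ss], of "fst (t c1)" c1 "Suc r1" c1]
        cells_pos[of r1 c1] co_nth_in_cells[OF j] next_cell by auto
    moreover have "dom h = remaining (Suc j)" using dom_h take_Suc_conv_app_nth[OF jl] by auto
    ultimately show False using co_nth_corner(1)[OF j next_cell] by simp
  qed
  moreover have "arms_bounded h ?d (r1, c1) (Some (t ?d))"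
    unfolding arms_bounded_def t_k[unfolded k]
  proof (intro allI impI)
    fix i assume i: "(i, ?d) \<in> dom h \<and> (i, ?d) \<noteq> (r1, c1) \<and> arm (the (h (i, ?d))) \<noteq> []"
    have "i \<le> \<sigma>"
    proof (cases "i = \<sigma>")
      case False
      then have "same_dest j"
        using prev i k unfolding arms_bounded_def by (cases "same_dest j") auto
      then obtain p where "above_path h ?d (\<sigma>,k) (F (co ! j)) p" using prev by auto
      then show ?thesis using i False k unfolding above_path_def arms_bounded_def by (cases "p ?d") force
    qed simp
    moreover have "\<forall>a\<in>set (arm (the (h (\<sigma>, ?d)))). a \<le> last (arm (the (h (\<sigma>, ?d))))"
      using semistandard_valid[OF ss cur_in] k by (auto simp: valid_hook_def intro: sorted_le_last)
    ultimately show "case Some (\<sigma>, last (arm (the (h (\<sigma>, ?d))))) of None \<Rightarrow> False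
        | Some (\<rho>, q) \<Rightarrow> i \<le> \<rho> \<and> (i = \<rho> \<longrightarrow> (\<forall>a\<in>set (arm (the (h (i, ?d)))). a \<le> q))"
      by simp
  qed
  ultimately have "above_path h ?d (r1, c1) 0 t"
    using path by (simp add: above_path_def)
  then show ?thesis using d1 next_cell by auto
qed

lemma crowding_inv_next:
  assumes j: "Suc j < length co" and inv: "crowding_inv j (F (co ! j)) (h, (\<sigma>,k))"
  shows "crowding_inv (Suc j) 0 (h, co ! Suc j)"
proof -
  let ?d = "dest_col (co ! j)" and ?d1 = "dest_col (co ! Suc j)"
  have jl: "j < length co" using j by simp
  have F_pos: "0 < F (co ! j)" using F_bounds co_nth_in_cells[OF jl] by (cases "co ! j") auto
  have k: "k = ?d" and ss: "semistandard h" and dom_h: "dom h = remaining j - {co ! j}"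
    and arms_right: "\<And>i c. (i,c) \<in> dom h \<Longrightarrow> ?d < c \<Longrightarrow> (i,c) \<noteq> (\<sigma>,k) \<Longrightarrow> arm (the (h (i,c))) = []"
    using inv F_pos unfolding crowding_inv_def by (auto simp: dest_col_def)
  have dom_next: "dom h = remaining (Suc j)" using dom_h take_Suc_conv_app_nth[OF jl] by auto
  have d_mono: "?d \<le> ?d1" using dest_col_co_mono j by simp
  have next_cell: "co ! Suc j \<in> cells" using co_nth_in_cells[OF j] .
  have next_in: "co ! Suc j \<in> dom h"
    using next_cell co_nth_notin_take[OF j] dom_next by (simp add: skew_def)
  have d1_lt: "?d1 < snd (co ! Suc j)" using dest_col_bounds[OF next_cell] by simp
  have arms_next: "arm (the (h (i,c))) = []" if "(i,c) \<in> dom h" "?d1 < c" for i c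
    using arms_right[OF that(1)] that(2) d_mono k by fastforce
  have prev_next: "if same_dest (Suc j) then \<exists>p. above_path h ?d1 (co ! Suc j) 0 p
                   else arms_bounded h ?d1 (co ! Suc j) None"
  proof (cases "same_dest (Suc j)")
    case True
    then show ?thesis using above_path_of_trail[OF j True inv] by simp
  next
    case False
    then have "?d < ?d1" using d_mono by (simp add: same_dest_def)
    then have "arms_bounded h ?d1 (co ! Suc j) None"
      using arms_right k unfolding arms_bounded_def by fastforce
    then show ?thesis using False by simp
  qed
  moreover have "trail h (snd (co ! Suc j)) (co ! Suc j) 0 (\<lambda>_. (0,0))" by (rule trail_start)
  ultimately show ?thesis
    unfolding crowding_inv_def prod.case
    using ss dom_next next_in arms_next[of "fst (co ! Suc j)" "snd (co ! Suc j)"] d1_lt arms_next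
    by auto
qed

end

locale crowding_step = crowding +
  fixes j s :: nat and h :: hvt and \<sigma> k :: nat
  assumes j_lt: "j < length co" and s_lt: "s < F (co ! j)"
    and inv: "crowding_inv j s (h, (\<sigma>,k))"
begin

abbreviation "c0 \<equiv> snd (co ! j)"
abbreviation "dc \<equiv> dest_col (co ! j)"

lemma k_eq: "k = c0 - s"
  and semistandard_h: "semistandard h"
  and dom_h: "dom h = remaining j - (if s = 0 then {} else {co ! j})"
  and cur_in: "(\<sigma>,k) \<in> dom h"
  and start: "s = 0 \<Longrightarrow> (\<sigma>,k) = co ! j \<and> arm (the (h (\<sigma>,k))) = []"
  and armed: "0 < s \<Longrightarrow> arm (the (h (\<sigma>,k))) \<noteq> [] \<and> (dc < k \<longrightarrow> length (arm (the (h (\<sigma>,k)))) = 1)"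
  and arms_right: "(i,c) \<in> dom h \<Longrightarrow> dc < c \<Longrightarrow> (i,c) \<noteq> (\<sigma>,k) \<Longrightarrow> arm (the (h (i,c))) = []"
  and trail_h: "\<exists>t. trail h c0 (\<sigma>,k) s t"
  using inv unfolding crowding_inv_def by auto

lemma prev: "if same_dest j then \<exists>p. above_path h dc (\<sigma>,k) s p else arms_bounded h dc (\<sigma>,k) None"
  using inv unfolding crowding_inv_def prod.case by (elim conjE) assumption

lemma dc_pos: "1 \<le> dc" and dc_lt_k: "dc < k"
proof -
  have cell: "co ! j \<in> cells" using co_nth_in_cells[OF j_lt] .
  then show "1 \<le> dc" using dest_col_bounds by blast
  have "F (co ! j) \<le> c0 - 1" using F_bounds[of "fst (co ! j)" c0] cell by simp
  then show "dc < k" using k_eq s_lt by (simp add: dest_col_def)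
qed

lemma k_ge2: "2 \<le> k"
  using dc_pos dc_lt_k by simp

lemma arm_single: "0 < s \<Longrightarrow> \<exists>m. arm (the (h (\<sigma>,k))) = [m]"
  using armed dc_lt_k by (cases "arm (the (h (\<sigma>,k)))") auto

sublocale bump_site h \<sigma> k
proof
  show "semistandard h" "(\<sigma>,k) \<in> dom h" "2 \<le> k" by (fact semistandard_h cur_in k_ge2)+
  show "arm (the (h (\<sigma>,k))) = [] \<and> (Suc \<sigma>, k) \<notin> dom h \<and> (\<sigma>, Suc k) \<notin> dom h
        \<or> (\<exists>m. arm (the (h (\<sigma>,k))) = [m])"
  proof (cases "s = 0")
    case True
    then have "co ! j = (\<sigma>,k)" "arm (the (h (\<sigma>,k))) = []" using start by auto
    then show ?thesis using co_nth_corner[OF j_lt] dom_h True by auto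
  qed (use arm_single in blast)
qed

lemma path_below_target:
  assumes p: "path_through h dc k p" "fst (p k) \<le> \<sigma>"
    and p_last: "0 < s \<and> fst (p k) = \<sigma> \<longrightarrow> snd (p k) \<le> last (arm U)"
  shows "fst (p (k - 1)) \<le> rT" and "fst (p (k - 1)) = rT \<Longrightarrow> snd (p (k - 1)) \<le> qT"
proof -
  have path: "\<And>i. dc \<le> i \<Longrightarrow> i \<le> k \<Longrightarrow> (fst (p i), i) \<in> dom h"
    "\<And>i. dc < i \<Longrightarrow> i \<le> k \<Longrightarrow> snd (p i) \<in> set (ext_leg (the (h (fst (p i), i))))"
    "\<And>i. dc \<le> i \<Longrightarrow> i < k \<Longrightarrow> snd (p i) \<le> snd (p (Suc i))"
    using p(1) unfolding path_through_def by blast+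
  have k1: "dc \<le> k - 1" "Suc (k - 1) = k" using dc_lt_k by auto
  have mono: "snd (p (k - 1)) \<le> snd (p k)" using path(3)[of "k - 1"] k1 by simp
  have arm_bound: "snd (p k) \<le> m" if "arm U = [m]" "fst (p k) = \<sigma>" for m
    using p_last that start by (cases "s = 0") auto
  note below = path_below_bump[OF path(1)[of k] p(2) path(2)[of k] arm_bound path(1)[of "k - 1"]
      path_through_entry[OF p(1) k1(1)] mono]
  show "fst (p (k - 1)) \<le> rT" using below(1) dc_lt_k k1 by simp
  show "snd (p (k - 1)) \<le> qT" if "fst (p (k - 1)) = rT" using below(2) that dc_lt_k k1 by simp
qed

text \<open>Outside the destination column the cell \<open>(rT, c - 1)\<close> has no arm. In the destination
  column its arm was left by the previous crowding path, which runs weakly below the current one,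
  so it is bounded by \<open>bU\<close>.\<close>

lemma arm_V_le_bU:
  assumes new_row: "rT \<noteq> \<sigma>"
  shows "\<forall>a\<in>set (arm V). a \<le> bU"
proof (cases "k - 1 = dc")
  case False
  then have "arm V = []" using arms_right[OF rT_in] dc_lt_k target_ne_cell by simp
  then show ?thesis by simp
next
  case at_dc: True
  show ?thesis
  proof (cases "same_dest j")
    case True
    then obtain p where p: "above_path h dc (\<sigma>,k) s p" using prev by auto
    then have path: "path_through h dc k p" "fst (p k) \<le> \<sigma>"
      "0 < s \<and> fst (p k) = \<sigma> \<longrightarrow> snd (p k) \<le> last (arm U)" "arms_bounded h dc (\<sigma>,k) (Some (p dc))"
      unfolding above_path_def by auto
    obtain \<rho> q where \<rho>q: "p dc = (\<rho>, q)" by (cases "p dc")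
    have "\<rho> \<le> rT" "\<rho> = rT \<Longrightarrow> q \<le> bU"
      using path_below_target[OF path(1-3)] at_dc \<rho>q qT_eq new_row by auto
    moreover have "rT \<le> \<rho> \<and> (rT = \<rho> \<longrightarrow> (\<forall>a\<in>set (arm V). a \<le> q))" if "arm V \<noteq> []"
      using path(4) rT_in at_dc target_ne_cell that \<rho>q unfolding arms_bounded_def by fastforce
    ultimately show ?thesis by fastforce
  next
    case False
    then have "arms_bounded h dc (\<sigma>,k) None" using prev by simp
    then have "arm V = []" using rT_in at_dc target_ne_cell unfolding arms_bounded_def by fastforce
    then show ?thesis by simp
  qed
qed

lemma semistandard_bumped: "semistandard bumped"
  using semistandard_crowd_bump arm_V_le_bU by blast

lemma dom_bumped_remaining: "dom bumped = remaining j - {co ! j}"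
proof (cases "s = 0")
  case True
  then have "arm U = []" "(\<sigma>,k) = co ! j" using start by auto
  then show ?thesis using dom_bumped dom_h True by simp
next
  case False
  then have "arm U \<noteq> []" using armed by simp
  then show ?thesis using dom_bumped dom_h False by simp
qed

lemma arm_bumped_target: "arm (the (bumped (rT, k - 1))) = arm V @ [qT]"
  and bumped_target_in: "(rT, k - 1) \<in> dom bumped"
  using bumped_target by auto

lemma arms_right_bumped:
  assumes "(i,c) \<in> dom bumped" "dc < c" "(i,c) \<noteq> (rT, k - 1)"
  shows "arm (the (bumped (i,c))) = []"
proof (cases "(i,c) = (\<sigma>,k)")
  case True
  show ?thesis
  proof (cases "arm U = []")
    case True
    then show ?thesis using bumped_corner_removed assms(1) \<open>(i,c) = (\<sigma>,k)\<close> by auto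
  next
    case False
    then obtain m where "arm U = [m]" using site by auto
    then show ?thesis using bumped_arm_cell \<open>(i,c) = (\<sigma>,k)\<close> by auto
  qed
next
  case False
  then show ?thesis
    using bumped_other[OF False assms(3)] dom_bumped_other[OF False] assms arms_right by simp
qed

lemma trail_bumped: "\<exists>t. trail bumped c0 (rT, k - 1) (Suc s) t"
proof -
  obtain t where t: "trail h c0 (\<sigma>,k) s t" using trail_h by blast
  define t' where "t' = t(k - 1 := (rT, qT))"
  have k1: "k - 1 \<noteq> k" "Suc (k - 1) = k" using k_ge2 by auto
  have t_k: "t k = (\<sigma>, m)" if "0 < s" "arm U = [m]" for m
    using t that unfolding trail_def by simp
  have "t' (k - 1) = (rT, last (arm (the (bumped (rT, k - 1)))))"
    using arm_bumped_target by (simp add: t'_def)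
  moreover have "(fst (t' i), i) \<in> dom bumped \<and> snd (t' i) \<in> set (ext_leg (the (bumped (fst (t' i), i))))"
    if "k - 1 < i" "i < c0" for i
  proof (cases "i = k")
    case True
    then have "0 < s" using that k_eq by arith
    then obtain m where m: "arm U = [m]" using arm_single by blast
    obtain U' where "bumped (\<sigma>,k) = Some U'" "m \<in> set (ext_leg U')" using bumped_arm_cell[OF m] by blast
    then show ?thesis using True k1 t_k[OF \<open>0 < s\<close> m] by (simp add: t'_def domIff)
  next
    case False
    then have "k < i" using that by arith
    then have "(fst (t i), i) \<in> dom h \<and> snd (t i) \<in> set (ext_leg (the (h (fst (t i), i))))"
      using t that unfolding trail_def by simp
    moreover have "(fst (t i), i) \<noteq> (\<sigma>,k)" "(fst (t i), i) \<noteq> (rT, k - 1)" "i \<noteq> k - 1"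
      using \<open>k < i\<close> by auto
    ultimately show ?thesis using bumped_other dom_bumped_other by (simp add: t'_def)
  qed
  moreover have "snd (t' i) \<le> snd (t' (Suc i))" if "k - 1 \<le> i" "Suc i < c0" for i
  proof (cases "i = k - 1")
    case True
    then have "0 < s" using that k_eq k_ge2 by arith
    then obtain m where m: "arm U = [m]" using arm_single by blast
    then show ?thesis using True k1 t_k[OF \<open>0 < s\<close> m] qT_le_arm[OF m] by (simp add: t'_def)
  next
    case False
    then have "k \<le> i" using that k_ge2 by arith
    then show ?thesis using t that False unfolding trail_def by (simp add: t'_def)
  qed
  ultimately have "trail bumped c0 (rT, k - 1) (Suc s) t'" unfolding trail_def by simp
  then show ?thesis by blast
qed

lemma dc_le_k1: "dc \<le> k - 1"
  using dc_lt_k by simp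

lemma path_through_bumped:
  assumes "path_through h dc k p"
  shows "path_through bumped dc (k - 1) p"
proof -
  have col: "(fst (p i), i) \<noteq> (\<sigma>,k)" if "i \<le> k - 1" for i using that k_ge2 by auto
  have path: "\<And>i. dc \<le> i \<Longrightarrow> i \<le> k \<Longrightarrow> (fst (p i), i) \<in> dom h"
    "\<And>i. dc < i \<Longrightarrow> i \<le> k \<Longrightarrow> snd (p i) \<in> set (ext_leg (the (h (fst (p i), i))))"
    "\<And>i. dc \<le> i \<Longrightarrow> i < k \<Longrightarrow> snd (p i) \<le> snd (p (Suc i))"
    "snd (p dc) \<in> entries h (fst (p dc), dc)"
    using assms unfolding path_through_def by blast+
  show ?thesis
    unfolding path_through_def
  proof (intro conjI allI impI)
    fix i assume i: "dc \<le> i \<and> i \<le> k - 1"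
    then have "(fst (p i), i) \<in> dom h" using path(1)[of i] by linarith
    then show "(fst (p i), i) \<in> dom bumped" using dom_bumped_other[OF col] i by simp
  next
    fix i assume i: "dc < i \<and> i \<le> k - 1"
    then have "snd (p i) \<in> set (ext_leg (the (h (fst (p i), i))))" using path(2)[of i] by linarith
    then show "snd (p i) \<in> set (ext_leg (the (bumped (fst (p i), i))))"
      using bumped_ext_leg_mono[OF col] i by blast
  next
    fix i assume "dc \<le> i \<and> i < k - 1"
    then show "snd (p i) \<le> snd (p (Suc i))" using path(3)[of i] by linarith
  next
    show "snd (p dc) \<in> entries bumped (fst (p dc), dc)"
      using path(4) bumped_entries_mono[OF col[OF dc_le_k1]] by blast
  qed
qed

lemma arms_bounded_bumped:
  assumes "arms_bounded h dc (\<sigma>,k) b"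
  shows "arms_bounded bumped dc (rT, k - 1) b"
proof (rule arms_bounded_cong[OF assms])
  fix i assume "(i, dc) \<in> dom bumped" "(i, dc) \<noteq> (rT, k - 1)"
  moreover have "(i, dc) \<noteq> (\<sigma>,k)" using dc_lt_k by auto
  ultimately show "(i, dc) \<in> dom h \<and> (i, dc) \<noteq> (\<sigma>,k) \<and> bumped (i, dc) = h (i, dc)"
    using bumped_other dom_bumped_other by simp
qed

lemma prev_bumped:
  "if same_dest j then \<exists>p. above_path bumped dc (rT, k - 1) (Suc s) p
   else arms_bounded bumped dc (rT, k - 1) None"
proof (cases "same_dest j")
  case True
  then obtain p where "above_path h dc (\<sigma>,k) s p" using prev by auto
  then have p: "path_through h dc k p" "fst (p k) \<le> \<sigma>"
    "0 < s \<and> fst (p k) = \<sigma> \<longrightarrow> snd (p k) \<le> last (arm U)" "arms_bounded h dc (\<sigma>,k) (Some (p dc))"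
    unfolding above_path_def by auto
  have "above_path bumped dc (rT, k - 1) (Suc s) p"
    unfolding above_path_def
    using path_through_bumped[OF p(1)] path_below_target[OF p(1-3)] arms_bounded_bumped[OF p(4)]
      arm_bumped_target by auto
  then show ?thesis using True by auto
next
  case False
  then show ?thesis using prev arms_bounded_bumped by auto
qed

lemma crowding_inv_bumped: "crowding_inv j (Suc s) (bumped, (rT, k - 1))"
  unfolding crowding_inv_def prod.case
proof (intro conjI)
  show "snd (rT, k - 1) = c0 - Suc s" using k_eq by simp
  show "semistandard bumped" by (rule semistandard_bumped)
  show "dom bumped = remaining j - (if Suc s = 0 then {} else {co ! j})"
    using dom_bumped_remaining by simp
  show "(rT, k - 1) \<in> dom bumped" by (rule bumped_target_in)
  show "Suc s = 0 \<longrightarrow> (rT, k - 1) = co ! j \<and> arm (the (bumped (rT, k - 1))) = []" by simp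
  show "0 < Suc s \<longrightarrow> arm (the (bumped (rT, k - 1))) \<noteq> []
      \<and> (dc < snd (rT, k - 1) \<longrightarrow> length (arm (the (bumped (rT, k - 1)))) = 1)"
    using arm_bumped_target arms_right[OF rT_in] target_ne_cell by simp
  show "\<forall>i c. (i,c) \<in> dom bumped \<longrightarrow> dc < c \<longrightarrow> (i,c) \<noteq> (rT, k - 1)
      \<longrightarrow> arm (the (bumped (i,c))) = []"
    using arms_right_bumped by blast
  show "\<exists>t. trail bumped c0 (rT, k - 1) (Suc s) t" by (rule trail_bumped)
  show "if same_dest j then \<exists>p. above_path bumped dc (rT, k - 1) (Suc s) p
      else arms_bounded bumped dc (rT, k - 1) None"
    by (rule prev_bumped)
qed

end

context crowding
begin

lemma crowding_inv_step:
  assumes "j < length co" "s < F (co ! j)" "crowding_inv j s hc"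
  shows "crowding_inv j (Suc s) (crowd_bump hc)"
proof -
  obtain h \<sigma> k where hc: "hc = (h, (\<sigma>,k))" by (cases hc) auto
  interpret crowding_step mu lam S F j s h \<sigma> k
    using assms hc by (intro crowding_step.intro crowding_axioms crowding_step_axioms.intro) auto
  show ?thesis using crowding_inv_bumped snd_crowd_bump[of h \<sigma> k] hc by (metis prod.collapse)
qed
lemma crowding_inv_run:
  assumes j: "j < length co" and inv: "crowding_inv j 0 (h, co ! j)" and s: "s \<le> F (co ! j)"
  shows "crowding_inv j s ((crowd_bump ^^ s) (h, co ! j))"
  using s by (induction s) (auto intro: crowding_inv_step[OF j] simp: inv)

lemma crowding_inv_T_seq:
  assumes "j < length co" "s \<le> F (co ! j)"
  shows "crowding_inv j s ((crowd_bump ^^ s) (T_start S co F j, co ! j))"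
  using assms
proof (induction j arbitrary: s)
  case 0
  then show ?case using crowding_inv_run crowding_inv_start by simp
next
  case (Suc j)
  obtain h cur where hc: "(crowd_bump ^^ F (co ! j)) (T_start S co F j, co ! j) = (h, cur)"
    by (cases "(crowd_bump ^^ F (co ! j)) (T_start S co F j, co ! j)")
  then have "crowding_inv j (F (co ! j)) (h, cur)" using Suc by fastforce
  then have "crowding_inv (Suc j) 0 (h, co ! Suc j)"
    using crowding_inv_next Suc.prems(1) by (cases cur) blast
  then show ?case using crowding_inv_run Suc.prems hc by simp
qed

end

theorem proposition3p27:
  fixes mu lam :: "nat list" and S :: hvt and F :: "cell \<Rightarrow> nat"
  assumes "partition mu" and "partition lam"
    and "length lam = length mu"
    and "\<forall>i < length mu. lam ! i \<le> mu ! i"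
    and "set_valued_of_shape mu S"
    and "col_flagged_incr mu lam F"
  shows "\<forall>j < card (skew mu lam). \<forall>s < F (crowding_order mu lam F ! j).
           is_hvt (T_seq S (crowding_order mu lam F) F j (Suc s))"
proof (intro allI impI)
  interpret crowding mu lam S F
    using assms(1,2,5,6) by unfold_locales
  fix j s assume "j < card (skew mu lam)" "s < F (co ! j)"
  then have "j < length co" "Suc s \<le> F (co ! j)" using length_co by simp_all
  then have "crowding_inv j (Suc s) ((crowd_bump ^^ Suc s) (T_start S co F j, co ! j))"
    by (rule crowding_inv_T_seq)
  then have "semistandard (T_seq S co F j (Suc s))"
    unfolding T_seq_def crowding_inv_def by (simp split: prod.splits)
  then show "is_hvt (T_seq S co F j (Suc s))" by (rule semistandard_imp_is_hvt)
qed

end
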